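(* For each $n\ge 0$ there is an isomorphism of $A_n$-bimodules $$D_{n+1}\otimes_{A_{n+1}}X_n\cong A_n\oplus\big(X_{n-1}\otimes_{A_{n-1}}D_n\big),$$ where $A_n$ carries its standard bimodule structure, and for $n=0$ the second summand is interpreted as $0$.
   Context: $A_n$ is the nilCoxeter algebra: the unital $\mathbb{Q}$-algebra generated by $Y_1,\dots,Y_{n-1}$ with relations $Y_i^2=0$, $Y_iY_j=Y_jY_i$ for $|i-j|>1$, $Y_iY_{i+1}Y_i=Y_{i+1}Y_iY_{i+1}$ ($A_0=A_1=\mathbb{Q}$). Let $\chi_n:A_n\to A_{n+1}$, $\chi_n(Y_i)=Y_i$. $X_n$ is $A_{n+1}$ as an $(A_{n+1},A_n)$-bimodule (right action via $\chi_n$) and $D_{n+1}$ is $A_{n+1}$ as an $(A_n,A_{n+1})$-bimodule (left action via $\chi_n$). *)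

theory Defs
  imports Complex_Main
begin

section \<open>Free associative Q-algebra on generators Y_1, Y_2, ... (words = nat lists)\<close>

type_synonym fa = "nat list \<Rightarrow> rat"

definition fa_add :: "fa \<Rightarrow> fa \<Rightarrow> fa" where
  "fa_add f g = (\<lambda>w. f w + g w)"

definition fa_smul :: "rat \<Rightarrow> fa \<Rightarrow> fa" where
  "fa_smul c f = (\<lambda>w. c * f w)"

definition fa_mul :: "fa \<Rightarrow> fa \<Rightarrow> fa" where
  "fa_mul f g = (\<lambda>w. \<Sum>k\<le>length w. f (take k w) * g (drop k w))"

definition fa_mon :: "nat list \<Rightarrow> fa" where
  "fa_mon u = (\<lambda>w. if w = u then 1 else 0)"

definition fa_zero :: fa where "fa_zero = (\<lambda>w. 0)"

definition fa_one :: fa where "fa_one = fa_mon []"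

definition F :: "nat \<Rightarrow> fa set" where
  "F n = {f. finite {w. f w \<noteq> 0} \<and> (\<forall>w. f w \<noteq> 0 \<longrightarrow> set w \<subseteq> {1..<n})}"

definition nc_rels :: "nat \<Rightarrow> fa set" where
  "nc_rels n =
     {fa_mon [i, i] | i. i \<in> {1..<n}}
   \<union> {fa_add (fa_mon [i, j]) (fa_smul (-1) (fa_mon [j, i])) | i j.
        i \<in> {1..<n} \<and> j \<in> {1..<n} \<and> (i > j + 1 \<or> j > i + 1)}
   \<union> {fa_add (fa_mon [i, Suc i, i]) (fa_smul (-1) (fa_mon [Suc i, i, Suc i])) | i.
        i \<in> {1..<n} \<and> Suc i \<in> {1..<n}}"

inductive_set nc_ideal :: "nat \<Rightarrow> fa set" for n where
  zero: "fa_zero \<in> nc_ideal n"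
| step: "x \<in> nc_ideal n \<Longrightarrow> r \<in> nc_rels n \<Longrightarrow> set u \<subseteq> {1..<n} \<Longrightarrow> set v \<subseteq> {1..<n}
         \<Longrightarrow> fa_add x (fa_smul c (fa_mul (fa_mul (fa_mon u) r) (fa_mon v))) \<in> nc_ideal n"

definition nc_cls :: "nat \<Rightarrow> fa \<Rightarrow> fa set" where
  "nc_cls n f = {g \<in> F n. fa_add f (fa_smul (-1) g) \<in> nc_ideal n}"

definition rep :: "'a set \<Rightarrow> 'a" where
  "rep X = (SOME x. x \<in> X)"

record 'a alg =
  acarrier :: "'a set"
  aadd :: "'a \<Rightarrow> 'a \<Rightarrow> 'a"
  amul :: "'a \<Rightarrow> 'a \<Rightarrow> 'a"
  azero :: 'a
  aone :: 'a

definition nilcox :: "nat \<Rightarrow> fa set alg" where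
  "nilcox n = \<lparr> acarrier = nc_cls n ` F n,
               aadd = (\<lambda>X Y. nc_cls n (fa_add (rep X) (rep Y))),
               amul = (\<lambda>X Y. nc_cls n (fa_mul (rep X) (rep Y))),
               azero = nc_cls n fa_zero,
               aone = nc_cls n fa_one \<rparr>"

definition nc_chi :: "nat \<Rightarrow> fa set \<Rightarrow> fa set" where
  "nc_chi n X = nc_cls (Suc n) (rep X)"

record ('r, 's, 'm) bimod =
  mcarrier :: "'m set"
  madd :: "'m \<Rightarrow> 'm \<Rightarrow> 'm"
  mzero :: 'm
  lact :: "'r \<Rightarrow> 'm \<Rightarrow> 'm"
  ract :: "'m \<Rightarrow> 's \<Rightarrow> 'm"

definition regbimod :: "'a alg \<Rightarrow> ('r \<Rightarrow> 'a) \<Rightarrow> ('s \<Rightarrow> 'a) \<Rightarrow> ('r, 's, 'a) bimod" where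
  "regbimod A \<phi> \<psi> = \<lparr> mcarrier = acarrier A, madd = aadd A, mzero = azero A,
                      lact = (\<lambda>r a. amul A (\<phi> r) a), ract = (\<lambda>a s. amul A a (\<psi> s)) \<rparr>"

definition bimod_iso :: "'r alg \<Rightarrow> 's alg \<Rightarrow> ('r, 's, 'm) bimod \<Rightarrow> ('r, 's, 'n) bimod \<Rightarrow> bool" where
  "bimod_iso R S M N \<longleftrightarrow> (\<exists>f. bij_betw f (mcarrier M) (mcarrier N)
      \<and> (\<forall>x\<in>mcarrier M. \<forall>y\<in>mcarrier M. f (madd M x y) = madd N (f x) (f y))
      \<and> (\<forall>r\<in>acarrier R. \<forall>x\<in>mcarrier M. f (lact M r x) = lact N r (f x))
      \<and> (\<forall>s\<in>acarrier S. \<forall>x\<in>mcarrier M. f (ract M x s) = ract N (f x) s))"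

definition dsum :: "('r, 's, 'm) bimod \<Rightarrow> ('r, 's, 'n) bimod \<Rightarrow> ('r, 's, 'm \<times> 'n) bimod" where
  "dsum M N = \<lparr> mcarrier = mcarrier M \<times> mcarrier N,
               madd = (\<lambda>(x, y) (x', y'). (madd M x x', madd N y y')),
               mzero = (mzero M, mzero N),
               lact = (\<lambda>r (x, y). (lact M r x, lact N r y)),
               ract = (\<lambda>(x, y) s. (ract M x s, ract N y s)) \<rparr>"

definition zero_bimod :: "('r, 's, 'm) bimod" where
  "zero_bimod = \<lparr> mcarrier = {undefined}, madd = (\<lambda>_ _. undefined), mzero = undefined,
                  lact = (\<lambda>_ _. undefined), ract = (\<lambda>_ _. undefined) \<rparr>"

definition tz_delta :: "'m \<times> 'n \<Rightarrow> ('m \<times> 'n \<Rightarrow> int)" where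
  "tz_delta p = (\<lambda>q. if q = p then 1 else 0)"

definition tz_free :: "('r, 's, 'm) bimod \<Rightarrow> ('s, 't, 'n) bimod \<Rightarrow> ('m \<times> 'n \<Rightarrow> int) set" where
  "tz_free M N = {x. finite {p. x p \<noteq> 0} \<and> (\<forall>p. x p \<noteq> 0 \<longrightarrow> p \<in> mcarrier M \<times> mcarrier N)}"

definition tz_gens :: "('r, 's, 'm) bimod \<Rightarrow> 's alg \<Rightarrow> ('s, 't, 'n) bimod \<Rightarrow> ('m \<times> 'n \<Rightarrow> int) set" where
  "tz_gens M S N =
     {(\<lambda>q. tz_delta (madd M m m', n) q - tz_delta (m, n) q - tz_delta (m', n) q) | m m' n.
        m \<in> mcarrier M \<and> m' \<in> mcarrier M \<and> n \<in> mcarrier N}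
   \<union> {(\<lambda>q. tz_delta (m, madd N n n') q - tz_delta (m, n) q - tz_delta (m, n') q) | m n n'.
        m \<in> mcarrier M \<and> n \<in> mcarrier N \<and> n' \<in> mcarrier N}
   \<union> {(\<lambda>q. tz_delta (ract M m s, n) q - tz_delta (m, lact N s n) q) | m s n.
        m \<in> mcarrier M \<and> s \<in> acarrier S \<and> n \<in> mcarrier N}"

inductive_set tz_rel :: "('r, 's, 'm) bimod \<Rightarrow> 's alg \<Rightarrow> ('s, 't, 'n) bimod \<Rightarrow> ('m \<times> 'n \<Rightarrow> int) set"
  for M S N where
  zero: "(\<lambda>q. 0) \<in> tz_rel M S N"
| plus: "x \<in> tz_rel M S N \<Longrightarrow> g \<in> tz_gens M S N \<Longrightarrow> (\<lambda>q. x q + g q) \<in> tz_rel M S N"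
| minus: "x \<in> tz_rel M S N \<Longrightarrow> g \<in> tz_gens M S N \<Longrightarrow> (\<lambda>q. x q - g q) \<in> tz_rel M S N"

definition tz_cls :: "('r, 's, 'm) bimod \<Rightarrow> 's alg \<Rightarrow> ('s, 't, 'n) bimod
                      \<Rightarrow> ('m \<times> 'n \<Rightarrow> int) \<Rightarrow> ('m \<times> 'n \<Rightarrow> int) set" where
  "tz_cls M S N x = {y \<in> tz_free M N. (\<lambda>q. x q - y q) \<in> tz_rel M S N}"

definition tz_map :: "('m \<times> 'n \<Rightarrow> 'm \<times> 'n) \<Rightarrow> ('m \<times> 'n \<Rightarrow> int) \<Rightarrow> ('m \<times> 'n \<Rightarrow> int)" where
  "tz_map f x = (\<lambda>q. \<Sum>p\<in>{p. x p \<noteq> 0 \<and> f p = q}. x p)"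

definition tensor :: "('r, 's, 'm) bimod \<Rightarrow> 's alg \<Rightarrow> ('s, 't, 'n) bimod
                      \<Rightarrow> ('r, 't, ('m \<times> 'n \<Rightarrow> int) set) bimod" where
  "tensor M S N = \<lparr> mcarrier = tz_cls M S N ` tz_free M N,
      madd = (\<lambda>X Y. tz_cls M S N (\<lambda>q. rep X q + rep Y q)),
      mzero = tz_cls M S N (\<lambda>q. 0),
      lact = (\<lambda>r X. tz_cls M S N (tz_map (\<lambda>(m, n). (lact M r m, n)) (rep X))),
      ract = (\<lambda>X t. tz_cls M S N (tz_map (\<lambda>(m, n). (m, ract N n t)) (rep X))) \<rparr>"

definition Xmod :: "nat \<Rightarrow> (fa set, fa set, fa set) bimod" where
  "Xmod n = regbimod (nilcox (Suc n)) id (nc_chi n)"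

definition Dmod :: "nat \<Rightarrow> (fa set, fa set, fa set) bimod" where
  "Dmod m = regbimod (nilcox m) (nc_chi (m - 1)) id"

end

theory Submission
  imports Defs
begin

text \<open>
  Multiplication \<open>a \<otimes> b \<mapsto> a b\<close> identifies \<open>D\<^sub>n\<^sub>+\<^sub>1 \<otimes> X\<^sub>n\<close> with \<open>A\<^sub>n\<^sub>+\<^sub>1\<close>, viewed as an
  \<open>A\<^sub>n\<close>-bimodule through \<open>\<chi>\<^sub>n\<close>, because \<open>b \<otimes> c = b c \<otimes> 1\<close>. For \<open>n = 0\<close>, \<open>\<chi>\<^sub>0\<close> itself is
  an isomorphism. For \<open>n = m + 1\<close> the map \<open>(a, x \<otimes> y) \<mapsto> a + x Y\<^sub>m\<^sub>+\<^sub>1 y\<close> identifies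
  \<open>A\<^sub>m\<^sub>+\<^sub>1 \<oplus> (X\<^sub>m \<otimes> D\<^sub>m\<^sub>+\<^sub>1)\<close> with \<open>A\<^sub>m\<^sub>+\<^sub>2\<close>; it is balanced because \<open>Y\<^sub>m\<^sub>+\<^sub>1\<close> commutes
  with \<open>A\<^sub>m\<close>. This rests on the normal form: \<open>A\<^sub>n\<^sub>+\<^sub>1\<close> is a free left \<open>A\<^sub>n\<close>-module on
  the descending words \<open>Y\<^sub>n Y\<^sub>n\<^sub>-\<^sub>1 \<dots> Y\<^sub>j\<close> (\<open>1 \<le> j \<le> n + 1\<close>, the empty word for \<open>j = n + 1\<close>). The words span by rewriting with the commutation
  and braid relations. They are independent because \<open>A\<^sub>n\<^sub>+\<^sub>1\<close> acts faithfully on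
  sequences, \<open>Y\<^sub>i\<close> swapping the entries \<open>i, i + 1\<close> when they are increasing and
  killing the sequence otherwise: on an increasing sequence the word \<open>Y\<^sub>n \<dots> Y\<^sub>j\<close> moves
  the \<open>j\<close>-th entry to position \<open>n + 1\<close>, which separates the summands.
\<close>

section \<open>The free algebra on the letters \<open>Y\<^sub>i\<close>\<close>

lemma fa_mul_Nil: "fa_mul f g [] = f [] * g []"
  by (simp add: fa_mul_def)

lemma fa_mul_Cons: "fa_mul f g (a # w) = f [] * g (a # w) + fa_mul (\<lambda>u. f (a # u)) g w"
  unfolding fa_mul_def by (simp add: sum.atMost_Suc_shift del: sum.atMost_Suc)

lemma fa_mul_add_left: "fa_mul (\<lambda>u. f u + g u) h w = fa_mul f h w + fa_mul g h w"
  unfolding fa_mul_def by (simp add: sum.distrib distrib_right)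

lemma fa_mul_add_right: "fa_mul h (\<lambda>u. f u + g u) w = fa_mul h f w + fa_mul h g w"
  unfolding fa_mul_def by (simp add: sum.distrib distrib_left)

lemma fa_mul_smul_left: "fa_mul (\<lambda>u. c * f u) h w = c * fa_mul f h w"
  unfolding fa_mul_def by (simp add: sum_distrib_left mult.assoc)

lemma fa_mul_zero_left: "fa_mul (\<lambda>u. 0) f w = 0"
  by (simp add: fa_mul_def)

lemma fa_mul_assoc: "fa_mul (fa_mul f g) h w = fa_mul f (fa_mul g h) w"
proof (induction w arbitrary: f g h)
  case Nil
  then show ?case by (simp add: fa_mul_Nil)
next
  case (Cons a w)
  have "(\<lambda>u. fa_mul f g (a # u)) = (\<lambda>u. f [] * g (a # u) + fa_mul (\<lambda>u. f (a # u)) g u)"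
    by (simp add: fa_mul_Cons)
  then show ?case
    by (simp add: fa_mul_Cons fa_mul_Nil fa_mul_add_left fa_mul_smul_left Cons.IH)
      (simp add: algebra_simps)
qed

lemma fa_mul_one_left: "fa_mul (fa_mon []) f = f"
proof
  fix w show "fa_mul (fa_mon []) f w = f w"
  proof (cases w)
    case (Cons a w')
    have "(\<lambda>u. fa_mon [] (a # u)) = (\<lambda>u. 0)" by (auto simp: fa_mon_def)
    then show ?thesis using Cons by (simp add: fa_mul_Cons fa_mul_zero_left fa_mon_def)
  qed (simp add: fa_mul_Nil fa_mon_def)
qed

lemma fa_mul_one_right: "fa_mul f (fa_mon []) = f"
proof
  fix w
  have "fa_mul f (fa_mon []) w = (\<Sum>k\<le>length w. if k = length w then f w else 0)"
    unfolding fa_mul_def fa_mon_def by (rule sum.cong) auto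
  then show "fa_mul f (fa_mon []) w = f w" by simp
qed

lemma fa_mul_mon_left:
  "fa_mul (fa_mon u) f w = (if take (length u) w = u then f (drop (length u) w) else 0)"
proof (induction u arbitrary: w)
  case Nil
  then show ?case by (simp add: fa_mul_one_left)
next
  case (Cons a u)
  show ?case
  proof (cases w)
    case Nil
    then show ?thesis by (simp add: fa_mul_Nil fa_mon_def)
  next
    case (Cons b w')
    show ?thesis
    proof (cases "a = b")
      case True
      then have "(\<lambda>v. fa_mon (a # u) (b # v)) = fa_mon u" by (auto simp: fa_mon_def)
      then show ?thesis using Cons True Cons.IH[of w'] by (simp add: fa_mul_Cons fa_mon_def)
    next
      case False
      then have "(\<lambda>v. fa_mon (a # u) (b # v)) = (\<lambda>v. 0)" by (auto simp: fa_mon_def)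
      then show ?thesis using Cons False by (simp add: fa_mul_Cons fa_mon_def fa_mul_zero_left)
    qed
  qed
qed

text \<open>A copy of \<^typ>\<open>fa\<close> as a type of its own, so that the free algebra becomes an instance of
  \<^class>\<open>ring_1\<close>.\<close>

typedef fralg = "UNIV :: fa set" by auto

instantiation fralg :: ring_1
begin
definition "zero_fralg = Abs_fralg (\<lambda>w. 0)"
definition "one_fralg = Abs_fralg (fa_mon [])"
definition "plus_fralg x y = Abs_fralg (\<lambda>w. Rep_fralg x w + Rep_fralg y w)"
definition "minus_fralg x y = Abs_fralg (\<lambda>w. Rep_fralg x w - Rep_fralg y w)"
definition "uminus_fralg x = Abs_fralg (\<lambda>w. - Rep_fralg x w)"
definition "times_fralg x y = Abs_fralg (fa_mul (Rep_fralg x) (Rep_fralg y))"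
instance
proof
  fix a b c :: fralg
  show "a * b * c = a * (b * c)"
    by (simp add: times_fralg_def Abs_fralg_inverse fa_mul_assoc[abs_def])
  show "1 * a = a"
    by (simp add: times_fralg_def one_fralg_def Abs_fralg_inverse fa_mul_one_left Rep_fralg_inverse)
  show "a * 1 = a"
    by (simp add: times_fralg_def one_fralg_def Abs_fralg_inverse fa_mul_one_right Rep_fralg_inverse)
  show "a + b + c = a + (b + c)" by (simp add: plus_fralg_def Abs_fralg_inverse add.assoc)
  show "a + b = b + a" by (simp add: plus_fralg_def add.commute)
  show "0 + a = a" by (simp add: plus_fralg_def zero_fralg_def Abs_fralg_inverse Rep_fralg_inverse)
  show "- a + a = 0" by (simp add: plus_fralg_def zero_fralg_def uminus_fralg_def Abs_fralg_inverse)
  show "a - b = a + - b"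
    by (simp add: plus_fralg_def minus_fralg_def uminus_fralg_def Abs_fralg_inverse)
  show "(a + b) * c = a * c + b * c"
    by (simp add: plus_fralg_def times_fralg_def Abs_fralg_inverse fa_mul_add_left[abs_def])
  show "a * (b + c) = a * b + a * c"
    by (simp add: plus_fralg_def times_fralg_def Abs_fralg_inverse fa_mul_add_right[abs_def])
  show "(0::fralg) \<noteq> 1"
    by (simp add: zero_fralg_def one_fralg_def Abs_fralg_inject fa_mon_def fun_eq_iff)
qed
end

lemma Rep_fralg_plus: "Rep_fralg (x + y) = (\<lambda>w. Rep_fralg x w + Rep_fralg y w)"
  by (simp add: plus_fralg_def Abs_fralg_inverse)

lemma Rep_fralg_minus: "Rep_fralg (x - y) = (\<lambda>w. Rep_fralg x w - Rep_fralg y w)"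
  by (simp add: minus_fralg_def Abs_fralg_inverse)

lemma Rep_fralg_uminus: "Rep_fralg (- x) = (\<lambda>w. - Rep_fralg x w)"
  by (simp add: uminus_fralg_def Abs_fralg_inverse)

lemma Rep_fralg_zero: "Rep_fralg 0 = (\<lambda>w. 0)"
  by (simp add: zero_fralg_def Abs_fralg_inverse)

lemma Rep_fralg_times: "Rep_fralg (x * y) = fa_mul (Rep_fralg x) (Rep_fralg y)"
  by (simp add: times_fralg_def Abs_fralg_inverse)

lemma Rep_fralg_one: "Rep_fralg 1 = fa_mon []"
  by (simp add: one_fralg_def Abs_fralg_inverse)

lemma Rep_fralg_sum: "Rep_fralg (sum f S) = (\<lambda>w. \<Sum>i\<in>S. Rep_fralg (f i) w)"
  by (induction S rule: infinite_finite_induct) (auto simp: Rep_fralg_zero Rep_fralg_plus)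

definition mon :: "nat list \<Rightarrow> fralg" where
  "mon u = Abs_fralg (fa_mon u)"

definition scal :: "rat \<Rightarrow> fralg" where
  "scal c = Abs_fralg (\<lambda>w. if w = [] then c else 0)"

lemma Rep_fralg_mon: "Rep_fralg (mon u) = fa_mon u"
  by (simp add: mon_def Abs_fralg_inverse)

lemma Rep_fralg_scal: "Rep_fralg (scal c) = (\<lambda>w. if w = [] then c else 0)"
  by (simp add: scal_def Abs_fralg_inverse)

lemma mon_Nil: "mon [] = 1"
  by (simp add: mon_def one_fralg_def)

lemma mon_append: "mon (u @ v) = mon u * mon v"
proof -
  have "fa_mul (fa_mon u) (fa_mon v) = fa_mon (u @ v)"
    apply (rule ext)
    apply (simp add: fa_mul_mon_left)
    apply (auto simp: fa_mon_def append_eq_conv_conj)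
    by (metis append_take_drop_id)
  then show ?thesis by (simp add: mon_def times_fralg_def Abs_fralg_inverse)
qed

lemma Rep_fralg_scal_mult: "Rep_fralg (scal c * x) = (\<lambda>w. c * Rep_fralg x w)"
proof
  fix w show "Rep_fralg (scal c * x) w = c * Rep_fralg x w"
  proof (cases w)
    case (Cons a w')
    have "(\<lambda>u. Rep_fralg (scal c) (a # u)) = (\<lambda>u. 0)" by (auto simp: Rep_fralg_scal)
    then show ?thesis
      using Cons by (simp add: Rep_fralg_times fa_mul_Cons fa_mul_zero_left Rep_fralg_scal)
  qed (simp add: Rep_fralg_times Rep_fralg_scal fa_mul_Nil)
qed

lemma Rep_fralg_mult_scal: "Rep_fralg (x * scal c) = (\<lambda>w. Rep_fralg x w * c)"
proof
  fix w
  have "fa_mul (Rep_fralg x) (Rep_fralg (scal c)) w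
      = (\<Sum>k\<le>length w. if k = length w then Rep_fralg x w * c else 0)"
    unfolding fa_mul_def Rep_fralg_scal by (rule sum.cong) auto
  then show "Rep_fralg (x * scal c) w = Rep_fralg x w * c" by (simp add: Rep_fralg_times)
qed

lemma scal_commute: "scal c * x = x * scal c"
  by (rule Rep_fralg_inject[THEN iffD1]) (simp add: Rep_fralg_scal_mult Rep_fralg_mult_scal mult.commute)

lemma scal_mult: "scal (a * b) = scal a * scal b"
  by (rule Rep_fralg_inject[THEN iffD1]) (auto simp: Rep_fralg_scal_mult Rep_fralg_scal)

lemma scal_one: "scal 1 = 1"
  by (rule Rep_fralg_inject[THEN iffD1]) (auto simp: Rep_fralg_one Rep_fralg_scal fa_mon_def)

lemma scal_minus: "scal (- a) = - scal a"
  by (rule Rep_fralg_inject[THEN iffD1]) (auto simp: Rep_fralg_uminus Rep_fralg_scal)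

definition supp :: "fralg \<Rightarrow> nat list set" where
  "supp x = {w. Rep_fralg x w \<noteq> 0}"

definition free_on :: "nat set \<Rightarrow> fralg set" where
  "free_on A = {x. finite (supp x) \<and> (\<forall>w\<in>supp x. set w \<subseteq> A)}"

abbreviation free_below :: "nat \<Rightarrow> fralg set" where
  "free_below n \<equiv> free_on {1..<n}"

lemma free_below_iff: "x \<in> free_below n \<longleftrightarrow> Rep_fralg x \<in> F n"
  by (auto simp: free_on_def F_def supp_def)

lemma supp_plus: "supp (x + y) \<subseteq> supp x \<union> supp y"
  by (auto simp: supp_def Rep_fralg_plus)

lemma supp_diff: "supp (x - y) \<subseteq> supp x \<union> supp y"
  by (auto simp: supp_def Rep_fralg_minus)

lemma supp_scal_mult: "supp (scal c * x) \<subseteq> supp x"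
  by (auto simp: supp_def Rep_fralg_scal_mult)

lemma supp_mon: "supp (mon w) = {w}"
  by (auto simp: supp_def Rep_fralg_mon fa_mon_def)

lemma supp_mult: "supp (x * y) \<subseteq> (\<lambda>(u, v). u @ v) ` (supp x \<times> supp y)"
proof
  fix w assume "w \<in> supp (x * y)"
  then have "(\<Sum>k\<le>length w. Rep_fralg x (take k w) * Rep_fralg y (drop k w)) \<noteq> 0"
    by (simp add: supp_def Rep_fralg_times fa_mul_def)
  then obtain k where "Rep_fralg x (take k w) * Rep_fralg y (drop k w) \<noteq> 0"
    by (meson sum.neutral)
  then have "(take k w, drop k w) \<in> supp x \<times> supp y" by (simp add: supp_def)
  then show "w \<in> (\<lambda>(u, v). u @ v) ` (supp x \<times> supp y)"
    by (metis (no_types, lifting) append_take_drop_id case_prod_conv image_eqI)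
qed

lemma finite_supp_mult: "finite (supp x) \<Longrightarrow> finite (supp y) \<Longrightarrow> finite (supp (x * y))"
  using supp_mult[of x y] by (meson finite_SigmaI finite_imageI finite_subset)

lemma finite_supp_sum: "(\<And>i. i \<in> S \<Longrightarrow> finite (supp (f i))) \<Longrightarrow> finite (supp (sum f S))"
proof (induction S rule: infinite_finite_induct)
  case (insert x S)
  then show ?case using supp_plus[of "f x" "sum f S"] by (auto intro: finite_subset)
qed (simp_all add: supp_def Rep_fralg_zero)

lemma free_on_finite_supp: "x \<in> free_on A \<Longrightarrow> finite (supp x)"
  by (simp add: free_on_def)

lemma free_on_zero [simp]: "0 \<in> free_on A"
  by (simp add: free_on_def supp_def Rep_fralg_zero)

lemma free_on_add [intro]: "x \<in> free_on A \<Longrightarrow> y \<in> free_on A \<Longrightarrow> x + y \<in> free_on A"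
  using supp_plus[of x y] unfolding free_on_def by (auto intro: finite_subset)

lemma free_on_uminus [intro]: "x \<in> free_on A \<Longrightarrow> - x \<in> free_on A"
proof -
  have "supp (- x) = supp x" by (auto simp: supp_def Rep_fralg_uminus)
  then show "x \<in> free_on A \<Longrightarrow> - x \<in> free_on A" unfolding free_on_def by auto
qed

lemma free_on_diff [intro]: "x \<in> free_on A \<Longrightarrow> y \<in> free_on A \<Longrightarrow> x - y \<in> free_on A"
  by (metis free_on_add free_on_uminus diff_conv_add_uminus)

lemma free_on_mon [intro]: "set w \<subseteq> A \<Longrightarrow> mon w \<in> free_on A"
  by (simp add: free_on_def supp_mon)

lemma free_on_one [intro]: "1 \<in> free_on A"
  using free_on_mon[of "[]" A] by (simp add: mon_Nil)

lemma free_on_mult [intro]: "x \<in> free_on A \<Longrightarrow> y \<in> free_on A \<Longrightarrow> x * y \<in> free_on A"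
  using supp_mult[of x y] finite_supp_mult[of x y] unfolding free_on_def by fastforce

lemma free_on_scal [intro]: "scal c \<in> free_on A"
proof -
  have "supp (scal c) \<subseteq> {[]}" by (auto simp: supp_def Rep_fralg_scal split: if_splits)
  then show ?thesis unfolding free_on_def by (auto intro: finite_subset)
qed

lemma free_on_sum [intro]: "(\<And>i. i \<in> S \<Longrightarrow> f i \<in> free_on A) \<Longrightarrow> sum f S \<in> free_on A"
  by (induction S rule: infinite_finite_induct) auto

lemma free_on_of_int [intro]: "of_int k \<in> free_on A"
proof (induction k rule: int_induct[where k = 0])
  case (step1 i) then show ?case by (simp add: free_on_add free_on_one)
next
  case (step2 i) then show ?case by (simp add: free_on_diff free_on_one)
qed simp

lemma free_on_mono: "A \<subseteq> B \<Longrightarrow> free_on A \<subseteq> free_on B"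
  by (auto simp: free_on_def)

lemma free_below_Suc: "x \<in> free_below n \<Longrightarrow> x \<in> free_below (Suc n)"
  using free_on_mono[of "{1..<n}" "{1..<Suc n}"] by auto

lemma fralg_expansion:
  assumes "finite S" "supp x \<subseteq> S"
  shows "x = (\<Sum>w\<in>S. scal (Rep_fralg x w) * mon w)"
proof -
  have "Rep_fralg (\<Sum>w\<in>S. scal (Rep_fralg x w) * mon w) = Rep_fralg x"
  proof
    fix v
    have "Rep_fralg (\<Sum>w\<in>S. scal (Rep_fralg x w) * mon w) v = (\<Sum>w\<in>S. if v = w then Rep_fralg x w else 0)"
      by (auto simp: Rep_fralg_sum Rep_fralg_scal_mult Rep_fralg_mon fa_mon_def intro!: sum.cong)
    also have "\<dots> = Rep_fralg x v"
      using assms by (auto simp: supp_def)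
    finally show "Rep_fralg (\<Sum>w\<in>S. scal (Rep_fralg x w) * mon w) v = Rep_fralg x v" .
  qed
  then show ?thesis by (simp add: Rep_fralg_inject)
qed

lemma free_on_induct [consumes 1, case_names zero step]:
  assumes x: "x \<in> free_on A"
    and zero: "P 0"
    and step: "\<And>y c w. y \<in> free_on A \<Longrightarrow> P y \<Longrightarrow> set w \<subseteq> A \<Longrightarrow> P (y + scal c * mon w)"
  shows "P x"
proof -
  define part where "part S = (\<Sum>w\<in>S. scal (Rep_fralg x w) * mon w)" for S
  have fin: "finite (supp x)" and letters: "\<forall>w\<in>supp x. set w \<subseteq> A"
    using x by (auto simp: free_on_def)
  have "part S \<in> free_on A \<and> P (part S)" if "finite S" "S \<subseteq> supp x" for S
    using that
  proof (induction S rule: finite_induct)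
    case (insert w S)
    then have "set w \<subseteq> A" "part S \<in> free_on A" "P (part S)" using letters by auto
    moreover have "part (insert w S) = part S + scal (Rep_fralg x w) * mon w"
      using insert by (simp add: part_def add.commute)
    ultimately show ?case using step[of "part S"] by auto
  qed (simp add: part_def zero)
  moreover have "x = part (supp x)"
    unfolding part_def by (rule fralg_expansion[OF fin order_refl])
  ultimately show ?thesis using fin by (metis order_refl)
qed


section \<open>The nilCoxeter algebra as a quotient of the free algebra\<close>

definition rel_ideal :: "nat \<Rightarrow> fralg set" where
  "rel_ideal n = {x. Rep_fralg x \<in> nc_ideal n}"

definition rels :: "nat \<Rightarrow> fralg set" where
  "rels n = Abs_fralg ` nc_rels n"

lemma fa_sub_Rep_fralg: "fa_add (Rep_fralg x) (fa_smul (-1) (Rep_fralg y)) = Rep_fralg (x - y)"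
  by (auto simp: fa_add_def fa_smul_def Rep_fralg_minus)

lemma mem_rels_iff:
  "r \<in> rels n \<longleftrightarrow>
     (\<exists>i. r = mon [i, i] \<and> i \<in> {1..<n})
   \<or> (\<exists>i j. r = mon [i, j] - mon [j, i] \<and> i \<in> {1..<n} \<and> j \<in> {1..<n} \<and> (i > j + 1 \<or> j > i + 1))
   \<or> (\<exists>i. r = mon [i, Suc i, i] - mon [Suc i, i, Suc i] \<and> i \<in> {1..<n} \<and> Suc i \<in> {1..<n})"
proof -
  have "r \<in> rels n \<longleftrightarrow> Rep_fralg r \<in> nc_rels n"
    unfolding rels_def using Rep_fralg_inverse Abs_fralg_inverse by (metis UNIV_I imageE image_eqI)
  moreover have "Rep_fralg r = fa_add (fa_mon a) (fa_smul (-1) (fa_mon b)) \<longleftrightarrow> r = mon a - mon b"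
    for a b by (metis Rep_fralg_mon fa_sub_Rep_fralg Rep_fralg_inject)
  moreover have "Rep_fralg r = fa_mon a \<longleftrightarrow> r = mon a" for a
    by (metis Rep_fralg_mon Rep_fralg_inject)
  ultimately show ?thesis unfolding nc_rels_def
    by (simp only: Un_iff mem_Collect_eq disj_assoc)
qed

lemma Rep_fralg_ideal_step:
  "fa_add (Rep_fralg x) (fa_smul c (fa_mul (fa_mul (fa_mon u) (Rep_fralg r)) (fa_mon v)))
   = Rep_fralg (x + scal c * (mon u * r * mon v))"
proof -
  have "Rep_fralg (x + scal c * (mon u * r * mon v)) = (\<lambda>w. Rep_fralg x w + c * Rep_fralg (mon u * r * mon v) w)"
    by (simp add: Rep_fralg_plus Rep_fralg_scal_mult)
  also have "Rep_fralg (mon u * r * mon v) = fa_mul (fa_mul (fa_mon u) (Rep_fralg r)) (fa_mon v)"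
    by (simp add: Rep_fralg_times Rep_fralg_mon)
  finally show ?thesis by (simp add: fa_add_def fa_smul_def)
qed

lemma rel_ideal_zero [simp]: "0 \<in> rel_ideal n"
  using nc_ideal.zero by (simp add: rel_ideal_def Rep_fralg_zero fa_zero_def)

lemma rel_ideal_step:
  "x \<in> rel_ideal n \<Longrightarrow> r \<in> rels n \<Longrightarrow> set u \<subseteq> {1..<n} \<Longrightarrow> set v \<subseteq> {1..<n}
   \<Longrightarrow> x + scal c * (mon u * r * mon v) \<in> rel_ideal n"
  unfolding rel_ideal_def rels_def
  using nc_ideal.step[of "Rep_fralg x" n "Rep_fralg r" u v c]
  by (auto simp: Rep_fralg_ideal_step Abs_fralg_inverse)

lemma rel_ideal_induct [consumes 1, case_names zero step]:
  assumes x: "x \<in> rel_ideal n"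
    and zero: "P 0"
    and step: "\<And>y r u v c. y \<in> rel_ideal n \<Longrightarrow> P y \<Longrightarrow> r \<in> rels n
      \<Longrightarrow> set u \<subseteq> {1..<n} \<Longrightarrow> set v \<subseteq> {1..<n} \<Longrightarrow> P (y + scal c * (mon u * r * mon v))"
  shows "P x"
proof -
  have "P (Abs_fralg f)" if "f \<in> nc_ideal n" for f
    using that
  proof (induction f rule: nc_ideal.induct)
    case zero
    then show ?case using \<open>P 0\<close> by (simp add: zero_fralg_def fa_zero_def)
  next
    case (step y r u v c)
    then have "P (Abs_fralg y + scal c * (mon u * Abs_fralg r * mon v))"
      by (intro assms(3)) (auto simp: rel_ideal_def Abs_fralg_inverse rels_def)
    then show ?case
      using Rep_fralg_ideal_step[of "Abs_fralg y" c u "Abs_fralg r" v]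
      by (simp add: Abs_fralg_inverse Rep_fralg_inverse)
  qed
  then show ?thesis using x by (metis Rep_fralg_inverse mem_Collect_eq rel_ideal_def)
qed

lemma rel_ideal_add [intro]:
  assumes "x \<in> rel_ideal n" "y \<in> rel_ideal n"
  shows "x + y \<in> rel_ideal n"
  using assms(2)
proof (induction y rule: rel_ideal_induct)
  case (step y r u v c)
  then show ?case using rel_ideal_step[of "x + y" n r u v c] by (simp add: add.assoc)
qed (simp add: assms(1))

lemma rel_ideal_scal [intro]: "x \<in> rel_ideal n \<Longrightarrow> scal c * x \<in> rel_ideal n"
proof (induction x rule: rel_ideal_induct)
  case (step y r u v d)
  then show ?case using rel_ideal_step[of "scal c * y" n r u v "c * d"]
    by (simp add: distrib_left scal_mult mult.assoc)
qed simp

lemma rel_ideal_uminus [intro]: "x \<in> rel_ideal n \<Longrightarrow> - x \<in> rel_ideal n"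
  using rel_ideal_scal[of x n "-1"] by (simp add: scal_minus scal_one)

lemma rel_ideal_diff [intro]: "x \<in> rel_ideal n \<Longrightarrow> y \<in> rel_ideal n \<Longrightarrow> x - y \<in> rel_ideal n"
  by (metis rel_ideal_add rel_ideal_uminus diff_conv_add_uminus)

lemma rel_ideal_sum [intro]: "(\<And>i. i \<in> S \<Longrightarrow> f i \<in> rel_ideal n) \<Longrightarrow> sum f S \<in> rel_ideal n"
  by (induction S rule: infinite_finite_induct) auto

lemma rel_ideal_mon_mult [intro]: "x \<in> rel_ideal n \<Longrightarrow> set w \<subseteq> {1..<n} \<Longrightarrow> mon w * x \<in> rel_ideal n"
proof (induction x rule: rel_ideal_induct)
  case (step y r u v c)
  have "mon w * (y + scal c * (mon u * r * mon v)) = mon w * y + scal c * (mon (w @ u) * r * mon v)"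
    by (simp add: distrib_left mon_append mult.assoc[symmetric] scal_commute[of c "mon w"])
  then show ?case using step rel_ideal_step[of "mon w * y" n r "w @ u" v c] by simp
qed simp

lemma rel_ideal_mult_mon [intro]: "x \<in> rel_ideal n \<Longrightarrow> set w \<subseteq> {1..<n} \<Longrightarrow> x * mon w \<in> rel_ideal n"
proof (induction x rule: rel_ideal_induct)
  case (step y r u v c)
  have "(y + scal c * (mon u * r * mon v)) * mon w = y * mon w + scal c * (mon u * r * mon (v @ w))"
    by (simp add: distrib_right mon_append mult.assoc)
  then show ?case using step rel_ideal_step[of "y * mon w" n r u "v @ w" c] by simp
qed simp

lemma rel_ideal_mult_left [intro]: "g \<in> free_below n \<Longrightarrow> x \<in> rel_ideal n \<Longrightarrow> g * x \<in> rel_ideal n"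
proof (induction g rule: free_on_induct)
  case (step y c w)
  then show ?case by (simp add: distrib_right mult.assoc rel_ideal_add rel_ideal_scal rel_ideal_mon_mult)
qed simp

lemma rel_ideal_mult_right [intro]: "g \<in> free_below n \<Longrightarrow> x \<in> rel_ideal n \<Longrightarrow> x * g \<in> rel_ideal n"
proof (induction g rule: free_on_induct)
  case (step y c w)
  have "x * (y + scal c * mon w) = x * y + scal c * (x * mon w)"
    by (simp add: distrib_left mult.assoc[symmetric] scal_commute[of c x])
  then show ?case using step by (simp add: rel_ideal_add rel_ideal_scal rel_ideal_mult_mon)
qed simp

lemma rels_subset_free_below: "r \<in> rels n \<Longrightarrow> r \<in> free_below n"
  unfolding mem_rels_iff by (auto intro!: free_on_mon free_on_diff)

lemma rel_ideal_subset_free_below: "x \<in> rel_ideal n \<Longrightarrow> x \<in> free_below n"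
proof (induction x rule: rel_ideal_induct)
  case (step y r u v c)
  then show ?case using rels_subset_free_below by (auto intro!: free_on_add free_on_mult free_on_mon)
qed simp

lemma rels_Suc: "r \<in> rels n \<Longrightarrow> r \<in> rels (Suc n)"
proof -
  have "nc_rels n \<subseteq> nc_rels (Suc n)"
    unfolding nc_rels_def by (intro Un_mono) fastforce+
  then show "r \<in> rels n \<Longrightarrow> r \<in> rels (Suc n)" unfolding rels_def by blast
qed

lemma rel_ideal_Suc: "x \<in> rel_ideal n \<Longrightarrow> x \<in> rel_ideal (Suc n)"
proof (induction x rule: rel_ideal_induct)
  case (step y r u v c)
  then have "set u \<subseteq> {1..<Suc n}" "set v \<subseteq> {1..<Suc n}" by auto
  then show ?case using rel_ideal_step[of y "Suc n" r u v c] rels_Suc step by auto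
qed simp

lemma rel_ideal_generator:
  "r \<in> rels n \<Longrightarrow> set u \<subseteq> {1..<n} \<Longrightarrow> set v \<subseteq> {1..<n} \<Longrightarrow> mon u * r * mon v \<in> rel_ideal n"
  using rel_ideal_step[OF rel_ideal_zero, of r n u v 1] by (simp add: scal_one)

lemma rel_ideal_diff_trans: "x - y \<in> rel_ideal n \<Longrightarrow> y - z \<in> rel_ideal n \<Longrightarrow> x - z \<in> rel_ideal n"
  using rel_ideal_add by fastforce

lemma rel_ideal_diff_sym: "x - y \<in> rel_ideal n \<Longrightarrow> y - x \<in> rel_ideal n"
  using rel_ideal_uminus by fastforce

lemma mon_sq_in_ideal: "i \<in> {1..<n} \<Longrightarrow> mon [i, i] \<in> rel_ideal n"
  using rel_ideal_generator[of "mon [i, i]" n "[]" "[]"] by (auto simp: mon_Nil mem_rels_iff)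

lemma mon_comm_in_ideal:
  assumes "i \<in> {1..<n}" "j \<in> {1..<n}" "i > j + 1 \<or> j > i + 1"
  shows "mon [i, j] - mon [j, i] \<in> rel_ideal n"
proof -
  have "mon [i, j] - mon [j, i] \<in> rels n"
    unfolding mem_rels_iff using assms by (intro disjI2 disjI1 exI[of _ i] exI[of _ j]) simp
  then show ?thesis using rel_ideal_generator[of _ n "[]" "[]"] by (simp add: mon_Nil)
qed

lemma mon_braid_in_ideal:
  assumes "i \<in> {1..<n}" "Suc i \<in> {1..<n}"
  shows "mon [i, Suc i, i] - mon [Suc i, i, Suc i] \<in> rel_ideal n"
proof -
  have "mon [i, Suc i, i] - mon [Suc i, i, Suc i] \<in> rels n"
    unfolding mem_rels_iff using assms by (intro disjI2 exI[of _ i]) simp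
  then show ?thesis using rel_ideal_generator[of _ n "[]" "[]"] by (simp add: mon_Nil)
qed

lemma mon_context_in_ideal:
  "mon a - mon b \<in> rel_ideal n \<Longrightarrow> set u \<subseteq> {1..<n} \<Longrightarrow> set v \<subseteq> {1..<n}
   \<Longrightarrow> mon (u @ a @ v) - mon (u @ b @ v) \<in> rel_ideal n"
  using rel_ideal_mon_mult[OF rel_ideal_mult_mon, of "mon a - mon b" n v u]
  by (simp add: mon_append algebra_simps)

lemma mon_commute_word_in_ideal:
  "set u \<subseteq> {1..<n} \<Longrightarrow> i \<in> {1..<n} \<Longrightarrow> \<forall>k\<in>set u. k > i + 1 \<or> i > k + 1
   \<Longrightarrow> mon (u @ [i]) - mon (i # u) \<in> rel_ideal n"
proof (induction u)
  case (Cons a u)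
  have "mon ([a] @ (u @ [i]) @ []) - mon ([a] @ (i # u) @ []) \<in> rel_ideal n"
    by (rule mon_context_in_ideal) (use Cons in auto)
  moreover have "mon ([] @ [a, i] @ u) - mon ([] @ [i, a] @ u) \<in> rel_ideal n"
    by (rule mon_context_in_ideal) (use Cons mon_comm_in_ideal in auto)
  ultimately show ?case using rel_ideal_diff_trans by simp
qed simp

lemma top_letter_commute:
  "x \<in> free_below m \<Longrightarrow> x * mon [Suc m] - mon [Suc m] * x \<in> rel_ideal (Suc (Suc m))"
proof (induction x rule: free_on_induct)
  case (step y c w)
  have "mon (w @ [Suc m]) - mon (Suc m # w) \<in> rel_ideal (Suc (Suc m))"
    by (rule mon_commute_word_in_ideal) (use step in auto)
  then have "scal c * (mon w * mon [Suc m] - mon [Suc m] * mon w) \<in> rel_ideal (Suc (Suc m))"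
    by (simp add: mon_append[symmetric] rel_ideal_scal)
  moreover have "mon [Suc m] * (scal c * mon w) = scal c * (mon [Suc m] * mon w)"
    by (metis mult.assoc scal_commute)
  then have "(y + scal c * mon w) * mon [Suc m] - mon [Suc m] * (y + scal c * mon w)
      = (y * mon [Suc m] - mon [Suc m] * y) + scal c * (mon w * mon [Suc m] - mon [Suc m] * mon w)"
    by (simp add: algebra_simps)
  ultimately show ?case using step by (simp add: rel_ideal_add)
qed simp

definition cls :: "nat \<Rightarrow> fralg \<Rightarrow> fa set" where
  "cls n x = nc_cls n (Rep_fralg x)"

definition repr :: "fa set \<Rightarrow> fralg" where
  "repr X = Abs_fralg (rep X)"

abbreviation Acar :: "nat \<Rightarrow> fa set set" where
  "Acar n \<equiv> acarrier (nilcox n)"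

lemma Rep_fralg_image_eq:
  assumes "\<And>g. g \<in> A \<longleftrightarrow> Abs_fralg g \<in> B"
  shows "A = Rep_fralg ` B"
proof
  show "A \<subseteq> Rep_fralg ` B"
  proof
    fix g assume "g \<in> A"
    then have "Abs_fralg g \<in> B" using assms by blast
    moreover have "g = Rep_fralg (Abs_fralg g)" by (simp add: Abs_fralg_inverse)
    ultimately show "g \<in> Rep_fralg ` B" by blast
  qed
  show "Rep_fralg ` B \<subseteq> A"
  proof
    fix g assume "g \<in> Rep_fralg ` B"
    then obtain y where "y \<in> B" "g = Rep_fralg y" by blast
    then show "g \<in> A" using assms by (simp add: Rep_fralg_inverse)
  qed
qed

lemma cls_eq_Rep_image: "cls n x = Rep_fralg ` {y \<in> free_below n. x - y \<in> rel_ideal n}"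
proof -
  have "nc_cls n (Rep_fralg x) = {g \<in> F n. Rep_fralg (x - Abs_fralg g) \<in> nc_ideal n}"
    unfolding nc_cls_def by (metis (no_types, lifting) Abs_fralg_inverse UNIV_I fa_sub_Rep_fralg)
  also have "\<dots> = Rep_fralg ` {y \<in> free_below n. x - y \<in> rel_ideal n}"
    by (rule Rep_fralg_image_eq) (simp add: free_below_iff free_below_iff[simplified] rel_ideal_def Abs_fralg_inverse)
  finally show ?thesis by (simp add: cls_def)
qed

lemma carrier_nilcox: "Acar n = cls n ` free_below n"
proof -
  have "F n = Rep_fralg ` free_below n"
    by (rule Rep_fralg_image_eq) (simp add: free_below_iff free_below_iff[simplified] Abs_fralg_inverse)
  then show ?thesis by (auto simp: nilcox_def cls_def)
qed

lemma cls_in_carrier: "x \<in> free_below n \<Longrightarrow> cls n x \<in> Acar n"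
  by (simp add: carrier_nilcox)

lemma cls_eqI: "x - y \<in> rel_ideal n \<Longrightarrow> cls n x = cls n y"
proof -
  assume xy: "x - y \<in> rel_ideal n"
  have "x - z \<in> rel_ideal n \<longleftrightarrow> y - z \<in> rel_ideal n" for z
    using rel_ideal_diff_trans[OF rel_ideal_diff_sym[OF xy]] rel_ideal_diff_trans[OF xy] by blast
  then show ?thesis by (simp add: cls_eq_Rep_image)
qed

lemma cls_eq_iff: "y \<in> free_below n \<Longrightarrow> cls n x = cls n y \<longleftrightarrow> x - y \<in> rel_ideal n"
proof
  assume "y \<in> free_below n" "cls n x = cls n y"
  then have "Rep_fralg y \<in> cls n x" by (simp add: cls_eq_Rep_image)
  then show "x - y \<in> rel_ideal n" by (auto simp: cls_eq_Rep_image Rep_fralg_inject)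
qed (rule cls_eqI)

lemma repr_cls:
  assumes "x \<in> free_below n"
  shows repr_cls_free_below: "repr (cls n x) \<in> free_below n"
    and repr_cls_diff: "repr (cls n x) - x \<in> rel_ideal n"
proof -
  have "rep (cls n x) \<in> cls n x"
    unfolding rep_def using assms by (intro someI[of "\<lambda>y. y \<in> cls n x" "Rep_fralg x"]) (simp add: cls_eq_Rep_image)
  then obtain y where "y \<in> free_below n" "x - y \<in> rel_ideal n" "rep (cls n x) = Rep_fralg y"
    by (auto simp: cls_eq_Rep_image)
  then show "repr (cls n x) \<in> free_below n" "repr (cls n x) - x \<in> rel_ideal n"
    by (simp_all add: repr_def Rep_fralg_inverse rel_ideal_diff_sym)
qed

lemma repr_free_below: "X \<in> Acar n \<Longrightarrow> repr X \<in> free_below n"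
  unfolding carrier_nilcox using repr_cls_free_below by blast

lemma cls_repr: "X \<in> Acar n \<Longrightarrow> cls n (repr X) = X"
  unfolding carrier_nilcox using repr_cls_diff cls_eqI by blast

lemma repr_inject: "a \<in> Acar n \<Longrightarrow> b \<in> Acar n \<Longrightarrow> repr a - repr b \<in> rel_ideal n \<Longrightarrow> a = b"
  by (metis cls_repr cls_eqI)

lemma aadd_cls: "x \<in> free_below n \<Longrightarrow> y \<in> free_below n \<Longrightarrow> aadd (nilcox n) (cls n x) (cls n y) = cls n (x + y)"
proof -
  assume "x \<in> free_below n" "y \<in> free_below n"
  then have "(repr (cls n x) - x) + (repr (cls n y) - y) \<in> rel_ideal n"
    using repr_cls_diff by blast
  then have "cls n (repr (cls n x) + repr (cls n y)) = cls n (x + y)"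
    by (intro cls_eqI) (simp add: algebra_simps)
  then show ?thesis
    by (simp add: nilcox_def cls_def[of n "_ + _"] repr_def Abs_fralg_inverse fa_add_def Rep_fralg_plus)
qed

lemma amul_cls: "x \<in> free_below n \<Longrightarrow> y \<in> free_below n \<Longrightarrow> amul (nilcox n) (cls n x) (cls n y) = cls n (x * y)"
proof -
  assume "x \<in> free_below n" "y \<in> free_below n"
  then have "(repr (cls n x) - x) * repr (cls n y) + x * (repr (cls n y) - y) \<in> rel_ideal n"
    using repr_cls_diff repr_cls_free_below by (blast intro: rel_ideal_add)
  then have "cls n (repr (cls n x) * repr (cls n y)) = cls n (x * y)"
    by (intro cls_eqI) (simp add: algebra_simps)
  then show ?thesis
    by (simp add: nilcox_def cls_def[of n "_ * _"] repr_def Abs_fralg_inverse Rep_fralg_times)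
qed

lemma azero_cls: "azero (nilcox n) = cls n 0"
  by (simp add: nilcox_def cls_def Rep_fralg_zero fa_zero_def)

lemma aone_cls: "aone (nilcox n) = cls n 1"
  by (simp add: nilcox_def cls_def Rep_fralg_one fa_one_def)

lemma chi_cls: "x \<in> free_below n \<Longrightarrow> nc_chi n (cls n x) = cls (Suc n) x"
proof -
  assume x: "x \<in> free_below n"
  have "nc_chi n (cls n x) = cls (Suc n) (repr (cls n x))"
    by (simp add: nc_chi_def cls_def repr_def Abs_fralg_inverse)
  also have "\<dots> = cls (Suc n) x"
    using repr_cls_diff[OF x] rel_ideal_Suc cls_eqI by blast
  finally show ?thesis .
qed

lemma chi_eq_cls_repr: "a \<in> Acar n \<Longrightarrow> nc_chi n a = cls (Suc n) (repr a)"
  using chi_cls[OF repr_free_below] cls_repr by metis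

lemma nilcox_aadd:
  assumes "a \<in> Acar n" "b \<in> Acar n"
  shows aadd_closed: "aadd (nilcox n) a b \<in> Acar n"
    and repr_aadd: "repr (aadd (nilcox n) a b) - (repr a + repr b) \<in> rel_ideal n"
proof -
  have sum: "repr a + repr b \<in> free_below n" using repr_free_below assms by blast
  have "aadd (nilcox n) a b = cls n (repr a + repr b)"
    using aadd_cls[OF repr_free_below repr_free_below] assms by (simp add: cls_repr)
  then show "aadd (nilcox n) a b \<in> Acar n" "repr (aadd (nilcox n) a b) - (repr a + repr b) \<in> rel_ideal n"
    using cls_in_carrier[OF sum] repr_cls_diff[OF sum] by simp_all
qed

lemma nilcox_amul:
  assumes "a \<in> Acar n" "b \<in> Acar n"
  shows amul_closed: "amul (nilcox n) a b \<in> Acar n"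
    and repr_amul: "repr (amul (nilcox n) a b) - repr a * repr b \<in> rel_ideal n"
proof -
  have prod: "repr a * repr b \<in> free_below n" using repr_free_below assms by blast
  have "amul (nilcox n) a b = cls n (repr a * repr b)"
    using amul_cls[OF repr_free_below repr_free_below] assms by (simp add: cls_repr)
  then show "amul (nilcox n) a b \<in> Acar n" "repr (amul (nilcox n) a b) - repr a * repr b \<in> rel_ideal n"
    using cls_in_carrier[OF prod] repr_cls_diff[OF prod] by simp_all
qed

lemma nilcox_chi:
  assumes "a \<in> Acar n"
  shows chi_closed: "nc_chi n a \<in> Acar (Suc n)"
    and repr_chi: "repr (nc_chi n a) - repr a \<in> rel_ideal (Suc n)"
  using chi_eq_cls_repr[OF assms] cls_in_carrier repr_cls_diff free_below_Suc[OF repr_free_below[OF assms]]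
  by simp_all

lemma repr_amul_chi_left:
  assumes "r \<in> Acar n" "a \<in> Acar n"
  shows "repr (amul (nilcox n) r a) - repr (nc_chi n r) * repr a \<in> rel_ideal (Suc n)"
proof -
  have "(repr (amul (nilcox n) r a) - repr r * repr a) - (repr (nc_chi n r) - repr r) * repr a \<in> rel_ideal (Suc n)"
    using rel_ideal_Suc[OF repr_amul[OF assms]]
      rel_ideal_mult_right[OF free_below_Suc[OF repr_free_below[OF assms(2)]] repr_chi[OF assms(1)]]
    by (rule rel_ideal_diff)
  then show ?thesis by (simp add: algebra_simps)
qed

lemma repr_amul_chi_right:
  assumes "a \<in> Acar n" "s \<in> Acar n"
  shows "repr (amul (nilcox n) a s) - repr a * repr (nc_chi n s) \<in> rel_ideal (Suc n)"
proof -
  have "(repr (amul (nilcox n) a s) - repr a * repr s) - repr a * (repr (nc_chi n s) - repr s) \<in> rel_ideal (Suc n)"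
    using rel_ideal_Suc[OF repr_amul[OF assms]]
      rel_ideal_mult_left[OF free_below_Suc[OF repr_free_below[OF assms(1)]] repr_chi[OF assms(2)]]
    by (rule rel_ideal_diff)
  then show ?thesis by (simp add: algebra_simps)
qed

lemma azero_closed: "azero (nilcox n) \<in> Acar n"
  using cls_in_carrier[of 0 n] by (simp add: azero_cls)

lemma aone_closed: "aone (nilcox n) \<in> Acar n"
  and repr_aone: "repr (aone (nilcox n)) - 1 \<in> rel_ideal n"
  using repr_cls_diff[of 1 n] cls_in_carrier[of 1 n] by (simp_all add: aone_cls free_on_one)

lemma amul_aone: "a \<in> Acar n \<Longrightarrow> amul (nilcox n) a (aone (nilcox n)) = a"
  using amul_cls[OF repr_free_below free_on_one, of a n] by (simp add: aone_cls cls_repr)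

section \<open>A faithful representation on sequences\<close>

text \<open>
  \<open>Y\<^sub>i\<close> exchanges the entries \<open>i\<close> and \<open>i + 1\<close> of a sequence if they increase and sends it to
  \<open>0\<close> (here \<^const>\<open>None\<close>) otherwise; this respects the nilCoxeter relations.
  \<open>perm_coeff p q x\<close> is the coefficient of \<open>q\<close> in the image of \<open>p\<close> under \<open>x\<close>.
\<close>

definition swap_act :: "nat \<Rightarrow> (nat \<Rightarrow> nat) \<Rightarrow> (nat \<Rightarrow> nat) option" where
  "swap_act i p = (if p i < p (Suc i) then Some (p(i := p (Suc i), Suc i := p i)) else None)"

fun word_act :: "nat list \<Rightarrow> (nat \<Rightarrow> nat) \<Rightarrow> (nat \<Rightarrow> nat) option" where
  "word_act [] p = Some p"
| "word_act (i # w) p = Option.bind (word_act w p) (swap_act i)"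

definition perm_coeff :: "(nat \<Rightarrow> nat) \<Rightarrow> (nat \<Rightarrow> nat) \<Rightarrow> fralg \<Rightarrow> rat" where
  "perm_coeff p q x = (\<Sum>w\<in>supp x. Rep_fralg x w * of_bool (word_act w p = Some q))"

lemma word_act_append: "word_act (u @ v) p = Option.bind (word_act v p) (word_act u)"
  by (induction u) (auto simp: bind_assoc)

lemma word_act_sq: "word_act [i, i] p = None"
  by (auto simp: swap_act_def split: if_splits)

lemma word_act_comm: "i > j + 1 \<or> j > i + 1 \<Longrightarrow> word_act [i, j] p = word_act [j, i] p"
  by (auto simp: swap_act_def fun_eq_iff)

lemma word_act_braid: "word_act [i, Suc i, i] p = word_act [Suc i, i, Suc i] p"
  by (auto simp: swap_act_def fun_eq_iff)

lemma perm_coeff_supset: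
  "finite S \<Longrightarrow> supp x \<subseteq> S \<Longrightarrow> perm_coeff p q x = (\<Sum>w\<in>S. Rep_fralg x w * of_bool (word_act w p = Some q))"
  unfolding perm_coeff_def by (rule sum.mono_neutral_left) (auto simp: supp_def)

lemma perm_coeff_add:
  "finite (supp x) \<Longrightarrow> finite (supp y) \<Longrightarrow> perm_coeff p q (x + y) = perm_coeff p q x + perm_coeff p q y"
  using supp_plus[of x y] perm_coeff_supset[of "supp x \<union> supp y"]
  by (simp add: Rep_fralg_plus sum.distrib distrib_right del: sum_mult_of_bool_eq)

lemma perm_coeff_diff:
  "finite (supp x) \<Longrightarrow> finite (supp y) \<Longrightarrow> perm_coeff p q (x - y) = perm_coeff p q x - perm_coeff p q y"
  using supp_diff[of x y] perm_coeff_supset[of "supp x \<union> supp y"]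
  by (simp add: Rep_fralg_minus sum_subtractf left_diff_distrib del: sum_mult_of_bool_eq)

lemma perm_coeff_scal_mult: "finite (supp x) \<Longrightarrow> perm_coeff p q (scal c * x) = c * perm_coeff p q x"
  using supp_scal_mult[of c x] perm_coeff_supset[of "supp x"]
  by (simp add: Rep_fralg_scal_mult sum_distrib_left mult.assoc del: sum_mult_of_bool_eq)

lemma perm_coeff_mon: "perm_coeff p q (mon w) = of_bool (word_act w p = Some q)"
  by (simp add: perm_coeff_def supp_mon Rep_fralg_mon fa_mon_def)

lemma perm_coeff_sum:
  "(\<And>i. i \<in> S \<Longrightarrow> finite (supp (f i))) \<Longrightarrow> perm_coeff p q (sum f S) = (\<Sum>i\<in>S. perm_coeff p q (f i))"
proof (induction S rule: infinite_finite_induct)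
  case (insert i S)
  then show ?case by (simp add: perm_coeff_add finite_supp_sum)
qed (simp_all add: perm_coeff_def supp_def Rep_fralg_zero)

lemma perm_coeff_mult_mon:
  assumes "x \<in> free_on A"
  shows "perm_coeff p q (x * mon v) = (case word_act v p of None \<Rightarrow> 0 | Some p' \<Rightarrow> perm_coeff p' q x)"
  using assms
proof (induction x rule: free_on_induct)
  case zero
  then show ?case by (simp add: perm_coeff_def supp_def Rep_fralg_zero split: option.split)
next
  case (step y c w)
  have fin: "finite (supp y)" "finite (supp (scal c * mon w))"
    using step free_on_finite_supp finite_subset[OF supp_scal_mult] by (auto simp: supp_mon)
  have "(y + scal c * mon w) * mon v = y * mon v + scal c * mon (w @ v)"
    by (simp add: distrib_right mon_append mult.assoc)
  then have "perm_coeff p q ((y + scal c * mon w) * mon v)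
      = perm_coeff p q (y * mon v) + c * of_bool (word_act (w @ v) p = Some q)"
    using fin finite_subset[OF supp_scal_mult, of "mon (w @ v)" c]
    by (simp add: perm_coeff_add perm_coeff_scal_mult finite_supp_mult perm_coeff_mon supp_mon)
  moreover have "perm_coeff p' q (y + scal c * mon w) = perm_coeff p' q y + c * of_bool (word_act w p' = Some q)" for p'
    using fin by (simp add: perm_coeff_add perm_coeff_scal_mult perm_coeff_mon supp_mon)
  ultimately show ?case using step by (simp add: word_act_append split: option.split)
qed

lemma perm_coeff_rel_ideal: "x \<in> rel_ideal n \<Longrightarrow> perm_coeff p q x = 0"
proof (induction x rule: rel_ideal_induct)
  case zero
  then show ?case by (simp add: perm_coeff_def supp_def Rep_fralg_zero)
next
  case (step y r u v c)
  have fin: "finite (supp (mon u * r * mon v))" "finite (supp y)"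
    using free_on_finite_supp[OF rels_subset_free_below[OF step.hyps(2)]]
      free_on_finite_supp[OF rel_ideal_subset_free_below[OF step.hyps(1)]]
    by (simp_all add: finite_supp_mult supp_mon)
  have sandwich: "mon u * (mon a - mon b) * mon v = mon (u @ a @ v) - mon (u @ b @ v)" for a b
    by (simp only: mon_append mult.assoc left_diff_distrib right_diff_distrib)
  have sq: "perm_coeff p q (mon u * mon [i, i] * mon v) = 0" for i
  proof -
    have "word_act (u @ [i, i] @ v) p = None"
      by (simp only: word_act_append word_act_sq)
        (cases "word_act v p"; simp del: word_act.simps add: word_act_sq)
    then show ?thesis by (simp add: perm_coeff_mon mon_append[symmetric])
  qed
  have comm: "perm_coeff p q (mon u * (mon [i, j] - mon [j, i]) * mon v) = 0"
    if "i > j + 1 \<or> j > i + 1" for i j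
    using word_act_comm[OF that] by (simp add: sandwich perm_coeff_diff supp_mon perm_coeff_mon word_act_append)
  have braid: "perm_coeff p q (mon u * (mon [i, Suc i, i] - mon [Suc i, i, Suc i]) * mon v) = 0" for i
    using word_act_braid[of i] by (simp add: sandwich perm_coeff_diff supp_mon perm_coeff_mon word_act_append)
  have "perm_coeff p q (mon u * r * mon v) = 0"
    using \<open>r \<in> rels n\<close> unfolding mem_rels_iff by (elim disjE exE conjE) (simp_all add: sq comm braid)
  then show ?case
    using step fin by (simp add: perm_coeff_add perm_coeff_scal_mult finite_subset[OF supp_scal_mult])
qed

section \<open>Normal form: \<open>A\<^sub>n\<^sub>+\<^sub>1\<close> is free over \<open>A\<^sub>n\<close> on the descending words\<close>

definition desc_word :: "nat \<Rightarrow> nat \<Rightarrow> nat list" where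
  "desc_word j n = rev [j..<Suc n]"

lemma desc_word_Suc: "j \<le> Suc n \<Longrightarrow> desc_word j (Suc n) = Suc n # desc_word j n"
  by (simp add: desc_word_def)

lemma desc_word_empty: "desc_word (Suc n) n = []"
  by (simp add: desc_word_def)

lemma set_desc_word: "set (desc_word j n) = {j..n}"
  by (auto simp: desc_word_def)

lemma desc_word_snoc: "j \<le> n \<Longrightarrow> desc_word (Suc j) n @ [j] = desc_word j n"
  unfolding desc_word_def using upt_conv_Cons[of j "Suc n"] by simp

lemma desc_word_split:
  assumes "1 \<le> j" "j < i" "i \<le> n"
  shows "desc_word j n = desc_word (Suc i) n @ [i, i - 1] @ desc_word j (i - 2)"
proof -
  have "[j..<Suc n] = [j..<i - 1] @ [i - 1..<Suc n]"
    using upt_add_eq_append[of j "i - 1" "Suc n - (i - 1)"] assms by simp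
  also have "[i - 1..<Suc n] = [i - 1, i] @ [Suc i..<Suc n]"
    using assms by (simp add: upt_conv_Cons)
  finally have "[j..<Suc n] = [j..<i - 1] @ [i - 1, i] @ [Suc i..<Suc n]" .
  moreover have "Suc (i - 2) = i - 1" using assms by simp
  ultimately show ?thesis unfolding desc_word_def by simp
qed

lemma mon_desc_word_free_below: "1 \<le> j \<Longrightarrow> mon (desc_word j n) \<in> free_below (Suc n)"
  by (intro free_on_mon) (auto simp: set_desc_word)

lemma desc_word_snoc_braid:
  assumes "1 \<le> j" "j < i" "i \<le> n"
  shows "mon (desc_word j n @ [i]) - mon ((i - 1) # desc_word j n) \<in> rel_ideal (Suc n)"
proof -
  define u where "u = desc_word (Suc i) n"
  define v where "v = desc_word j (i - 2)"
  have split: "desc_word j n = u @ [i, i - 1] @ v"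
    unfolding u_def v_def using desc_word_split assms by simp
  have u: "set u \<subseteq> {1..<Suc n}" "\<forall>k\<in>set u. k > (i - 1) + 1"
    unfolding u_def set_desc_word using assms by auto
  have v: "set v \<subseteq> {1..<Suc n}" "\<forall>k\<in>set v. i > k + 1"
    unfolding v_def set_desc_word using assms by auto
  have i: "Suc (i - 1) = i" using assms by simp
  text \<open>Move \<open>Y\<^sub>i\<close> left past \<open>v\<close>, apply the braid relation, and move \<open>Y\<^sub>i\<^sub>-\<^sub>1\<close> left past \<open>u\<close>.\<close>
  have "mon ((u @ [i, i - 1]) @ (v @ [i]) @ []) - mon ((u @ [i, i - 1]) @ (i # v) @ []) \<in> rel_ideal (Suc n)"
    by (rule mon_context_in_ideal[OF mon_commute_word_in_ideal]) (use u v assms in auto)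
  then have 1: "mon (desc_word j n @ [i]) - mon (u @ [i, i - 1, i] @ v) \<in> rel_ideal (Suc n)"
    unfolding split by simp
  have "mon (u @ [i - 1, Suc (i - 1), i - 1] @ v) - mon (u @ [Suc (i - 1), i - 1, Suc (i - 1)] @ v)
      \<in> rel_ideal (Suc n)"
    by (rule mon_context_in_ideal[OF mon_braid_in_ideal]) (use u v assms in auto)
  then have 2: "mon (u @ [i, i - 1, i] @ v) - mon (u @ [i - 1, i, i - 1] @ v) \<in> rel_ideal (Suc n)"
    using rel_ideal_diff_sym unfolding i by blast
  have "mon ([] @ (u @ [i - 1]) @ ([i, i - 1] @ v)) - mon ([] @ ((i - 1) # u) @ ([i, i - 1] @ v))
      \<in> rel_ideal (Suc n)"
    by (rule mon_context_in_ideal[OF mon_commute_word_in_ideal]) (use u v assms in auto)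
  then have 3: "mon (u @ [i - 1, i, i - 1] @ v) - mon ((i - 1) # desc_word j n) \<in> rel_ideal (Suc n)"
    unfolding split by simp
  show ?thesis using rel_ideal_diff_trans[OF rel_ideal_diff_trans[OF 1 2] 3] .
qed

definition desc_spanned :: "nat \<Rightarrow> fralg \<Rightarrow> bool" where
  "desc_spanned n x \<longleftrightarrow> (\<exists>g. (\<forall>j. g j \<in> free_below n)
     \<and> x - (\<Sum>j\<in>{1..Suc n}. g j * mon (desc_word j n)) \<in> rel_ideal (Suc n))"

lemma desc_spanned_basis:
  assumes "h \<in> free_below n" "t \<in> {1..Suc n}"
  shows "desc_spanned n (h * mon (desc_word t n))"
proof -
  have "(\<Sum>j\<in>{1..Suc n}. (if j = t then h else 0) * mon (desc_word j n)) = h * mon (desc_word t n)"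
    using assms(2) by (simp add: if_distrib[of "\<lambda>a. a * _"] cong: if_cong)
  then show ?thesis
    unfolding desc_spanned_def using assms(1) by (intro exI[of _ "\<lambda>j. if j = t then h else 0"]) auto
qed

lemma desc_spanned_cong: "x - y \<in> rel_ideal (Suc n) \<Longrightarrow> desc_spanned n y \<Longrightarrow> desc_spanned n x"
  unfolding desc_spanned_def using rel_ideal_diff_trans by blast

lemma desc_spanned_zero: "desc_spanned n 0"
  unfolding desc_spanned_def by (intro exI[of _ "\<lambda>j. 0"]) simp

lemma desc_spanned_add: "desc_spanned n x \<Longrightarrow> desc_spanned n y \<Longrightarrow> desc_spanned n (x + y)"
proof -
  assume "desc_spanned n x" "desc_spanned n y"
  then obtain g g' where
    g: "\<forall>j. g j \<in> free_below n" "x - (\<Sum>j\<in>{1..Suc n}. g j * mon (desc_word j n)) \<in> rel_ideal (Suc n)" and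
    g': "\<forall>j. g' j \<in> free_below n" "y - (\<Sum>j\<in>{1..Suc n}. g' j * mon (desc_word j n)) \<in> rel_ideal (Suc n)"
    unfolding desc_spanned_def by blast
  then have "x + y - (\<Sum>j\<in>{1..Suc n}. (g j + g' j) * mon (desc_word j n)) \<in> rel_ideal (Suc n)"
    using rel_ideal_add[OF g(2) g'(2)] by (simp add: distrib_right sum.distrib algebra_simps)
  then show ?thesis unfolding desc_spanned_def using g g' by (intro exI[of _ "\<lambda>j. g j + g' j"]) auto
qed

lemma desc_spanned_sum: "(\<And>i. i \<in> S \<Longrightarrow> desc_spanned n (f i)) \<Longrightarrow> desc_spanned n (sum f S)"
  by (induction S rule: infinite_finite_induct) (simp_all add: desc_spanned_zero desc_spanned_add)

lemma desc_spanned_mult_left: "h \<in> free_below n \<Longrightarrow> desc_spanned n x \<Longrightarrow> desc_spanned n (h * x)"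
proof -
  assume h: "h \<in> free_below n" and "desc_spanned n x"
  then obtain g where
    g: "\<forall>j. g j \<in> free_below n" "x - (\<Sum>j\<in>{1..Suc n}. g j * mon (desc_word j n)) \<in> rel_ideal (Suc n)"
    unfolding desc_spanned_def by blast
  then have "h * (x - (\<Sum>j\<in>{1..Suc n}. g j * mon (desc_word j n))) \<in> rel_ideal (Suc n)"
    using h free_below_Suc by blast
  then have "h * x - (\<Sum>j\<in>{1..Suc n}. (h * g j) * mon (desc_word j n)) \<in> rel_ideal (Suc n)"
    by (simp only: right_diff_distrib sum_distrib_left mult.assoc)
  then show ?thesis unfolding desc_spanned_def using g h by (intro exI[of _ "\<lambda>j. h * g j"]) auto
qed

lemma desc_spanned_letter:
  assumes "i \<in> {1..n}"
  shows "desc_spanned n (mon [i])"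
proof (cases "i = n")
  case True
  then show ?thesis
    using desc_spanned_basis[OF free_on_one, where n = n and t = n] assms by (simp add: desc_word_def)
next
  case False
  then have "mon [i] \<in> free_below n" using assms by (intro free_on_mon) auto
  then show ?thesis
    using desc_spanned_basis[of "mon [i]" n "Suc n"] by (simp add: desc_word_empty mon_Nil)
qed

lemma desc_spanned_desc_word_snoc:
  assumes j: "j \<in> {1..Suc n}" and i: "i \<in> {1..n}"
  shows "desc_spanned n (mon (desc_word j n @ [i]))"
proof (cases "j = Suc n")
  case True
  then show ?thesis using desc_spanned_letter[OF i] by (simp add: desc_word_empty)
next
  case False
  then have jn: "j \<le> n" using j by simp
  consider "i + 1 = j" | "i = j" | "i + 1 < j" | "j < i" by linarith
  then show ?thesis
  proof cases
    case 1
    then show ?thesis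
      using desc_spanned_basis[OF free_on_one, where n = n and t = i] desc_word_snoc[of i n] i jn by simp
  next
    case 2
    have "set (desc_word (Suc j) n) \<subseteq> {1..<Suc n}" "j \<in> {1..<Suc n}"
      using j jn by (auto simp: set_desc_word)
    then have "mon (desc_word (Suc j) n @ [j, j]) \<in> rel_ideal (Suc n)"
      using rel_ideal_mon_mult[OF mon_sq_in_ideal] by (simp add: mon_append)
    then show ?thesis
      using desc_word_snoc[OF jn, symmetric] 2 desc_spanned_cong[OF _ desc_spanned_zero] by simp
  next
    case 3
    have "mon (desc_word j n @ [i]) - mon [i] * mon (desc_word j n) \<in> rel_ideal (Suc n)"
      using mon_commute_word_in_ideal[of "desc_word j n" "Suc n" i] 3 i j
      by (simp add: set_desc_word mon_append[symmetric] subset_iff)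
    moreover have "mon [i] \<in> free_below n" using 3 i jn by (intro free_on_mon) auto
    ultimately show ?thesis using desc_spanned_cong desc_spanned_basis j by blast
  next
    case 4
    have "mon (desc_word j n @ [i]) - mon [i - 1] * mon (desc_word j n) \<in> rel_ideal (Suc n)"
      using desc_word_snoc_braid[of j i n] 4 i j by (simp add: mon_append[symmetric])
    moreover have "mon [i - 1] \<in> free_below n" using 4 i j by (intro free_on_mon) auto
    ultimately show ?thesis using desc_spanned_cong desc_spanned_basis j by blast
  qed
qed

lemma desc_spanned_mult_letter:
  assumes "desc_spanned n x" "i \<in> {1..n}"
  shows "desc_spanned n (x * mon [i])"
proof -
  obtain g where
    g: "\<forall>j. g j \<in> free_below n" "x - (\<Sum>j\<in>{1..Suc n}. g j * mon (desc_word j n)) \<in> rel_ideal (Suc n)"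
    using assms(1) unfolding desc_spanned_def by blast
  have "(x - (\<Sum>j\<in>{1..Suc n}. g j * mon (desc_word j n))) * mon [i] \<in> rel_ideal (Suc n)"
    using g assms(2) by (intro rel_ideal_mult_mon) auto
  then have "x * mon [i] - (\<Sum>j\<in>{1..Suc n}. g j * mon (desc_word j n @ [i])) \<in> rel_ideal (Suc n)"
    by (simp only: left_diff_distrib sum_distrib_right mon_append mult.assoc)
  moreover have "desc_spanned n (\<Sum>j\<in>{1..Suc n}. g j * mon (desc_word j n @ [i]))"
    using g(1) assms(2) by (intro desc_spanned_sum desc_spanned_mult_left desc_spanned_desc_word_snoc) auto
  ultimately show ?thesis by (rule desc_spanned_cong)
qed

lemma desc_spanned_mon: "set w \<subseteq> {1..<Suc n} \<Longrightarrow> desc_spanned n (mon w)"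
proof (induction w rule: rev_induct)
  case Nil
  then show ?case using desc_spanned_basis[OF free_on_one, where n = n and t = "Suc n"] by (simp add: desc_word_empty mon_Nil)
next
  case (snoc a w)
  then show ?case using desc_spanned_mult_letter[of n "mon w" a] by (simp add: mon_append)
qed

lemma desc_spanned_free_below: "x \<in> free_below (Suc n) \<Longrightarrow> desc_spanned n x"
proof (induction x rule: free_on_induct)
  case (step y c w)
  then show ?case by (intro desc_spanned_add desc_spanned_mult_left desc_spanned_mon) auto
qed (rule desc_spanned_zero)

text \<open>\<open>move_last j n p\<close> moves the \<open>j\<close>-th entry of \<open>p\<close> to position \<open>n + 1\<close>.\<close>

definition move_last :: "nat \<Rightarrow> nat \<Rightarrow> (nat \<Rightarrow> nat) \<Rightarrow> nat \<Rightarrow> nat" where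
  "move_last j n p = (\<lambda>k. if k < j then p k else if k \<le> n then p (Suc k) else if k = Suc n then p j else p k)"

lemma move_last_at_end: "j \<le> Suc n \<Longrightarrow> move_last j n p (Suc n) = p j"
  by (simp add: move_last_def)

lemma strict_mono_on_move_last:
  "strict_mono_on {1..Suc n} p \<Longrightarrow> 1 \<le> j \<Longrightarrow> strict_mono_on {1..n} (move_last j n p)"
  unfolding strict_mono_on_def move_last_def
  by (intro allI impI, elim conjE) (auto simp: not_less dest: spec2)

lemma word_act_desc_word:
  "strict_mono_on {1..Suc n} p \<Longrightarrow> 1 \<le> j \<Longrightarrow> j \<le> Suc n \<Longrightarrow> word_act (desc_word j n) p = Some (move_last j n p)"
proof (induction n arbitrary: j)
  case 0
  then show ?case by (auto simp: desc_word_def move_last_def fun_eq_iff)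
next
  case (Suc n)
  show ?case
  proof (cases "j = Suc (Suc n)")
    case True
    then show ?thesis by (auto simp: desc_word_empty move_last_def fun_eq_iff)
  next
    case False
    then have j: "j \<le> Suc n" using Suc by simp
    have "word_act (desc_word j n) p = Some (move_last j n p)"
      using Suc.IH[OF monotone_on_subset[OF Suc.prems(1)] Suc.prems(2) j] by auto
    moreover have "p j < p (Suc (Suc n))"
      using Suc.prems j by (auto simp: strict_mono_on_def)
    ultimately show ?thesis
      using j by (auto simp: desc_word_Suc swap_act_def move_last_def fun_eq_iff)
  qed
qed

lemma word_act_fixes_above:
  "word_act w p = Some q \<Longrightarrow> set w \<subseteq> {1..<n} \<Longrightarrow> n < k \<Longrightarrow> q k = p k"
proof (induction w arbitrary: q)
  case (Cons i w)
  then obtain q' where "word_act w p = Some q'" "swap_act i q' = Some q"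
    by (cases "word_act w p") auto
  with Cons show ?case by (auto simp: swap_act_def split: if_splits)
qed simp

lemma perm_coeff_nonzero_fixes_above:
  assumes "x \<in> free_below n" "perm_coeff p q x \<noteq> 0" "n < k"
  shows "q k = p k"
proof -
  from assms(2) obtain w where "w \<in> supp x" "Rep_fralg x w * of_bool (word_act w p = Some q) \<noteq> 0"
    unfolding perm_coeff_def by (meson sum.neutral)
  then have "word_act w p = Some q" "set w \<subseteq> {1..<n}"
    using assms(1) by (auto simp: free_on_def split: if_splits)
  then show ?thesis using word_act_fixes_above assms(3) by blast
qed

text \<open>
  On an increasing sequence \<open>p\<close>, the summand of index \<open>j\<close> puts \<open>p j\<close> in position \<open>n + 1\<close>, and
  the coefficients in \<open>A\<^sub>n\<close> do not touch that position: so the coefficient of \<open>q\<close> only sees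
  the summand with \<open>p j = q (n + 1)\<close>.
\<close>

lemma perm_coeff_desc_sum:
  assumes g: "\<forall>j\<in>{1..Suc n}. g j \<in> free_below n" and p: "strict_mono_on {1..Suc n} p"
    and j: "j \<in> {1..Suc n}" and q: "q (Suc n) = p j"
  shows "perm_coeff p q (\<Sum>k\<in>{1..Suc n}. g k * mon (desc_word k n)) = perm_coeff (move_last j n p) q (g j)"
proof -
  have summand: "perm_coeff p q (g k * mon (desc_word k n)) = perm_coeff (move_last k n p) q (g k)"
    if "k \<in> {1..Suc n}" for k
  proof -
    have "g k \<in> free_below n" using g that by blast
    then show ?thesis using perm_coeff_mult_mon[of "g k"] word_act_desc_word[OF p, of k] that by simp
  qed
  have others: "perm_coeff (move_last k n p) q (g k) = 0" if "k \<in> {1..Suc n} - {j}" for k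
  proof (rule ccontr)
    assume "perm_coeff (move_last k n p) q (g k) \<noteq> 0"
    then have "q (Suc n) = move_last k n p (Suc n)"
      using perm_coeff_nonzero_fixes_above[of "g k" n _ q "Suc n"] g that by auto
    then have "p k = p j" using q that by (simp add: move_last_at_end)
    then show False
      using p that j unfolding strict_mono_on_def by (metis DiffE insertI1 linorder_neqE_nat less_irrefl)
  qed
  have "finite (supp (g k * mon (desc_word k n)))" if "k \<in> {1..Suc n}" for k
    using g that by (intro finite_supp_mult) (auto intro: free_on_finite_supp simp: supp_mon)
  then have "perm_coeff p q (\<Sum>k\<in>{1..Suc n}. g k * mon (desc_word k n))
      = (\<Sum>k\<in>{1..Suc n}. perm_coeff p q (g k * mon (desc_word k n)))"
    by (rule perm_coeff_sum)
  also have "\<dots> = (\<Sum>k\<in>{1..Suc n}. perm_coeff (move_last k n p) q (g k))"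
    using summand by (rule sum.cong[OF refl])
  also have "\<dots> = perm_coeff (move_last j n p) q (g j)"
    using j others by (simp add: sum.remove del: sum.cl_ivl_Suc)
  finally show ?thesis .
qed

lemma desc_coeff_vanishes:
  assumes g: "\<forall>j\<in>{1..Suc n}. g j \<in> free_below n" and p: "strict_mono_on {1..Suc n} p"
    and vanish: "\<forall>q. perm_coeff p q (\<Sum>j\<in>{1..Suc n}. g j * mon (desc_word j n)) = 0"
    and j: "j \<in> {1..Suc n}"
  shows "perm_coeff (move_last j n p) q (g j) = 0"
proof (cases "q (Suc n) = p j")
  case True
  then show ?thesis using perm_coeff_desc_sum[OF g p j] vanish by simp
next
  case False
  show ?thesis
  proof (rule ccontr)
    assume "perm_coeff (move_last j n p) q (g j) \<noteq> 0"
    then have "q (Suc n) = move_last j n p (Suc n)"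
      using perm_coeff_nonzero_fixes_above[of "g j" n _ q "Suc n"] g j by auto
    then show False using False j by (simp add: move_last_at_end)
  qed
qed

theorem perm_coeff_faithful:
  "x \<in> free_below n \<Longrightarrow> strict_mono_on {1..n} p \<Longrightarrow> \<forall>q. perm_coeff p q x = 0 \<Longrightarrow> x \<in> rel_ideal n"
proof (induction n arbitrary: x p)
  case 0
  then have supp: "supp x \<subseteq> {[]}" by (auto simp: free_on_def)
  then have "perm_coeff p p x = Rep_fralg x []"
    by (subst perm_coeff_supset[where S = "{[]}"]) auto
  then have "Rep_fralg x = Rep_fralg 0" using 0 supp by (auto simp: Rep_fralg_zero supp_def fun_eq_iff)
  then show ?case by (simp add: Rep_fralg_inject)
next
  case (Suc n)
  obtain g where g: "\<forall>j. g j \<in> free_below n"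
    and d: "x - (\<Sum>j\<in>{1..Suc n}. g j * mon (desc_word j n)) \<in> rel_ideal (Suc n)"
    using desc_spanned_free_below[OF Suc.prems(1)] unfolding desc_spanned_def by blast
  let ?S = "\<Sum>j\<in>{1..Suc n}. g j * mon (desc_word j n)"
  have "finite (supp ?S)"
    using g by (intro finite_supp_sum finite_supp_mult) (auto intro: free_on_finite_supp simp: supp_mon)
  then have "\<forall>q. perm_coeff p q ?S = 0"
    using perm_coeff_rel_ideal[OF d] Suc.prems free_on_finite_supp by (simp add: perm_coeff_diff)
  then have "g j \<in> rel_ideal n" if "j \<in> {1..Suc n}" for j
    using Suc.IH[of "g j" "move_last j n p"] desc_coeff_vanishes[of n g p] g Suc.prems that
      strict_mono_on_move_last by auto
  then have "?S \<in> rel_ideal (Suc n)"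
    using mon_desc_word_free_below by (intro rel_ideal_sum rel_ideal_mult_right rel_ideal_Suc) auto
  then show ?case using rel_ideal_add[OF d] by (metis diff_add_cancel)
qed

theorem desc_coeffs_in_ideal:
  assumes "\<forall>j\<in>{1..Suc n}. g j \<in> free_below n"
    and "(\<Sum>j\<in>{1..Suc n}. g j * mon (desc_word j n)) \<in> rel_ideal (Suc n)" and "j \<in> {1..Suc n}"
  shows "g j \<in> rel_ideal n"
proof -
  have "strict_mono_on {1..Suc n} id" by (simp add: strict_mono_on_def)
  then show ?thesis
    using perm_coeff_faithful[of "g j" n "move_last j n id"] desc_coeff_vanishes[of n g id] assms
      strict_mono_on_move_last perm_coeff_rel_ideal by auto
qed

section \<open>Tensor products\<close>

definition zsupp :: "('m \<times> 'n \<Rightarrow> int) \<Rightarrow> ('m \<times> 'n) set" where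
  "zsupp x = {p. x p \<noteq> 0}"

definition tz_equiv ::
  "('r, 's, 'm) bimod \<Rightarrow> 's alg \<Rightarrow> ('s, 't, 'n) bimod \<Rightarrow> ('m \<times> 'n \<Rightarrow> int) \<Rightarrow> ('m \<times> 'n \<Rightarrow> int) \<Rightarrow> bool"
  where "tz_equiv M S N x y \<longleftrightarrow> (\<lambda>q. x q - y q) \<in> tz_rel M S N"

lemma tz_rel_add:
  assumes "x \<in> tz_rel M S N" "y \<in> tz_rel M S N"
  shows "(\<lambda>q. x q + y q) \<in> tz_rel M S N"
  using assms(2)
proof (induction y rule: tz_rel.induct)
  case zero
  then show ?case using assms(1) by simp
next
  case (plus y g)
  have "(\<lambda>q. (\<lambda>q. x q + y q) q + g q) \<in> tz_rel M S N" by (rule tz_rel.plus) (use plus in auto)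
  then show ?case by (simp add: add.assoc)
next
  case (minus y g)
  have "(\<lambda>q. (\<lambda>q. x q + y q) q - g q) \<in> tz_rel M S N" by (rule tz_rel.minus) (use minus in auto)
  then show ?case by (simp add: add_diff_eq)
qed

lemma tz_rel_uminus: "x \<in> tz_rel M S N \<Longrightarrow> (\<lambda>q. - x q) \<in> tz_rel M S N"
proof (induction x rule: tz_rel.induct)
  case (plus y g)
  then have "(\<lambda>q. (\<lambda>q. - y q) q - g q) \<in> tz_rel M S N" by (intro tz_rel.minus)
  then show ?case by simp
next
  case (minus y g)
  then have "(\<lambda>q. (\<lambda>q. - y q) q + g q) \<in> tz_rel M S N" by (intro tz_rel.plus)
  then show ?case by simp
qed (simp add: tz_rel.zero)

lemma tz_rel_gen: "g \<in> tz_gens M S N \<Longrightarrow> g \<in> tz_rel M S N"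
  using tz_rel.plus[OF tz_rel.zero, of g] by simp

lemma finite_zsupp_delta: "finite (zsupp (tz_delta p))"
  by (rule finite_subset[of _ "{p}"]) (auto simp: zsupp_def tz_delta_def)

lemma finite_zsupp_add: "finite (zsupp x) \<Longrightarrow> finite (zsupp y) \<Longrightarrow> finite (zsupp (\<lambda>q. x q + y q))"
  by (rule finite_subset[of _ "zsupp x \<union> zsupp y"]) (auto simp: zsupp_def)

lemma finite_zsupp_diff: "finite (zsupp x) \<Longrightarrow> finite (zsupp y) \<Longrightarrow> finite (zsupp (\<lambda>q. x q - y q))"
  by (rule finite_subset[of _ "zsupp x \<union> zsupp y"]) (auto simp: zsupp_def)

lemma finite_zsupp_gen: "g \<in> tz_gens M S N \<Longrightarrow> finite (zsupp g)"
  unfolding tz_gens_def by (auto intro!: finite_zsupp_diff finite_zsupp_delta)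

lemma finite_zsupp_rel: "x \<in> tz_rel M S N \<Longrightarrow> finite (zsupp x)"
proof (induction x rule: tz_rel.induct)
  case (plus x g)
  then show ?case using finite_zsupp_gen finite_zsupp_add by blast
next
  case (minus x g)
  then show ?case using finite_zsupp_gen finite_zsupp_diff by blast
qed (simp add: zsupp_def)

lemma tz_free_iff: "x \<in> tz_free M N \<longleftrightarrow> finite (zsupp x) \<and> zsupp x \<subseteq> mcarrier M \<times> mcarrier N"
  by (auto simp: tz_free_def zsupp_def)

lemma finite_zsupp_free: "x \<in> tz_free M N \<Longrightarrow> finite (zsupp x)"
  by (simp add: tz_free_iff)

lemma zsupp_tz_free: "x \<in> tz_free M N \<Longrightarrow> p \<in> zsupp x \<Longrightarrow> fst p \<in> mcarrier M \<and> snd p \<in> mcarrier N"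
  by (auto simp: tz_free_iff)

lemma tz_free_zero: "(\<lambda>q. 0) \<in> tz_free M N"
  by (simp add: tz_free_def)

lemma tz_free_add:
  assumes "x \<in> tz_free M N" "y \<in> tz_free M N"
  shows "(\<lambda>q. x q + y q) \<in> tz_free M N"
proof -
  have "zsupp (\<lambda>q. x q + y q) \<subseteq> zsupp x \<union> zsupp y" by (auto simp: zsupp_def)
  with assms show ?thesis unfolding tz_free_iff by (auto intro: finite_subset)
qed

lemma tz_free_diff:
  assumes "x \<in> tz_free M N" "y \<in> tz_free M N"
  shows "(\<lambda>q. x q - y q) \<in> tz_free M N"
proof -
  have "zsupp (\<lambda>q. x q - y q) \<subseteq> zsupp x \<union> zsupp y" by (auto simp: zsupp_def)
  with assms show ?thesis unfolding tz_free_iff by (auto intro: finite_subset)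
qed

lemma tz_free_delta: "p \<in> mcarrier M \<times> mcarrier N \<Longrightarrow> tz_delta p \<in> tz_free M N"
  unfolding tz_free_iff using finite_zsupp_delta[of p] by (auto simp: zsupp_def tz_delta_def)

lemma tz_free_sum_delta:
  "finite J \<Longrightarrow> (\<And>j. j \<in> J \<Longrightarrow> p j \<in> mcarrier M \<times> mcarrier N) \<Longrightarrow> (\<lambda>q. \<Sum>j\<in>J. tz_delta (p j) q) \<in> tz_free M N"
proof (induction J rule: finite_induct)
  case (insert a J)
  then have "(\<lambda>q. tz_delta (p a) q + (\<Sum>j\<in>J. tz_delta (p j) q)) \<in> tz_free M N"
    by (intro tz_free_add tz_free_delta) auto
  then show ?case using insert by simp
qed (simp add: tz_free_zero)

lemma zsupp_tz_map: "zsupp (tz_map f x) \<subseteq> f ` zsupp x"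
proof
  fix q assume "q \<in> zsupp (tz_map f x)"
  then have "(\<Sum>p\<in>{p. x p \<noteq> 0 \<and> f p = q}. x p) \<noteq> 0" by (simp add: zsupp_def tz_map_def)
  then obtain p where "p \<in> {p. x p \<noteq> 0 \<and> f p = q}" by (meson sum.neutral)
  then show "q \<in> f ` zsupp x" by (auto simp: zsupp_def)
qed

lemma tz_free_map:
  assumes "x \<in> tz_free M N" "\<And>p. p \<in> mcarrier M \<times> mcarrier N \<Longrightarrow> f p \<in> mcarrier M \<times> mcarrier N"
  shows "tz_map f x \<in> tz_free M N"
proof -
  have "f ` zsupp x \<subseteq> mcarrier M \<times> mcarrier N" "finite (f ` zsupp x)"
    using assms unfolding tz_free_iff by blast+
  then show ?thesis using zsupp_tz_map[of f x] unfolding tz_free_iff by (meson finite_subset order_trans)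
qed

lemma tz_equiv_refl: "tz_equiv M S N x x"
  by (simp add: tz_equiv_def tz_rel.zero)

lemma tz_equiv_sym: "tz_equiv M S N x y \<Longrightarrow> tz_equiv M S N y x"
  unfolding tz_equiv_def using tz_rel_uminus by fastforce

lemma tz_equiv_trans [trans]: "tz_equiv M S N x y \<Longrightarrow> tz_equiv M S N y z \<Longrightarrow> tz_equiv M S N x z"
  unfolding tz_equiv_def using tz_rel_add by fastforce

lemma tz_equiv_add:
  "tz_equiv M S N x x' \<Longrightarrow> tz_equiv M S N y y' \<Longrightarrow> tz_equiv M S N (\<lambda>q. x q + y q) (\<lambda>q. x' q + y' q)"
proof -
  assume "tz_equiv M S N x x'" "tz_equiv M S N y y'"
  then have "(\<lambda>q. (x q - x' q) + (y q - y' q)) \<in> tz_rel M S N"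
    unfolding tz_equiv_def by (rule tz_rel_add)
  then show ?thesis unfolding tz_equiv_def by (simp add: algebra_simps)
qed

lemma tz_equiv_uminus: "tz_equiv M S N x x' \<Longrightarrow> tz_equiv M S N (\<lambda>q. - x q) (\<lambda>q. - x' q)"
  unfolding tz_equiv_def using tz_rel_uminus by fastforce

lemma tz_equiv_sum:
  "(\<And>j. j \<in> J \<Longrightarrow> tz_equiv M S N (x j) (y j))
   \<Longrightarrow> tz_equiv M S N (\<lambda>q. \<Sum>j\<in>J. x j q) (\<lambda>q. \<Sum>j\<in>J. y j q)"
proof (induction J rule: infinite_finite_induct)
  case (insert a J)
  then have "tz_equiv M S N (\<lambda>q. x a q + (\<Sum>j\<in>J. x j q)) (\<lambda>q. y a q + (\<Sum>j\<in>J. y j q))"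
    by (intro tz_equiv_add) auto
  then show ?case using insert by simp
qed (simp_all add: tz_equiv_refl)

lemma tz_equiv_add_left:
  assumes "m \<in> mcarrier M" "m' \<in> mcarrier M" "n \<in> mcarrier N"
  shows "tz_equiv M S N (tz_delta (madd M m m', n)) (\<lambda>q. tz_delta (m, n) q + tz_delta (m', n) q)"
proof -
  have "(\<lambda>q. tz_delta (madd M m m', n) q - tz_delta (m, n) q - tz_delta (m', n) q) \<in> tz_gens M S N"
    unfolding tz_gens_def using assms by blast
  then show ?thesis unfolding tz_equiv_def using tz_rel_gen by (simp add: algebra_simps)
qed

lemma tz_equiv_add_right:
  assumes "m \<in> mcarrier M" "n \<in> mcarrier N" "n' \<in> mcarrier N"
  shows "tz_equiv M S N (tz_delta (m, madd N n n')) (\<lambda>q. tz_delta (m, n) q + tz_delta (m, n') q)"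
proof -
  have "(\<lambda>q. tz_delta (m, madd N n n') q - tz_delta (m, n) q - tz_delta (m, n') q) \<in> tz_gens M S N"
    unfolding tz_gens_def using assms by blast
  then show ?thesis unfolding tz_equiv_def using tz_rel_gen by (simp add: algebra_simps)
qed

lemma tz_equiv_balanced:
  assumes "m \<in> mcarrier M" "s \<in> acarrier S" "n \<in> mcarrier N"
  shows "tz_equiv M S N (tz_delta (ract M m s, n)) (tz_delta (m, lact N s n))"
proof -
  have "(\<lambda>q. tz_delta (ract M m s, n) q - tz_delta (m, lact N s n) q) \<in> tz_gens M S N"
    unfolding tz_gens_def using assms by blast
  then show ?thesis unfolding tz_equiv_def by (rule tz_rel_gen)
qed

lemma tz_equiv_delta_zero_left:
  assumes "z \<in> mcarrier M" "madd M z z = z" "n \<in> mcarrier N"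
  shows "tz_equiv M S N (tz_delta (z, n)) (\<lambda>q. 0)"
proof -
  have "tz_equiv M S N (tz_delta (z, n)) (\<lambda>q. tz_delta (z, n) q + tz_delta (z, n) q)"
    using tz_equiv_add_left[OF assms(1,1,3), of S] assms(2) by simp
  then have "(\<lambda>q. tz_delta (z, n) q - (tz_delta (z, n) q + tz_delta (z, n) q)) \<in> tz_rel M S N"
    unfolding tz_equiv_def .
  from tz_rel_uminus[OF this] show ?thesis unfolding tz_equiv_def by simp
qed

lemma tz_equiv_delta_zero_right:
  assumes "m \<in> mcarrier M" "z \<in> mcarrier N" "madd N z z = z"
  shows "tz_equiv M S N (tz_delta (m, z)) (\<lambda>q. 0)"
proof -
  have "tz_equiv M S N (tz_delta (m, z)) (\<lambda>q. tz_delta (m, z) q + tz_delta (m, z) q)"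
    using tz_equiv_add_right[OF assms(1,2,2), of S] assms(3) by simp
  then have "(\<lambda>q. tz_delta (m, z) q - (tz_delta (m, z) q + tz_delta (m, z) q)) \<in> tz_rel M S N"
    unfolding tz_equiv_def .
  from tz_rel_uminus[OF this] show ?thesis unfolding tz_equiv_def by simp
qed

lemma tz_equiv_delta_uminus_left:
  assumes "m \<in> mcarrier M" "m' \<in> mcarrier M" "n \<in> mcarrier N"
    and "z \<in> mcarrier M" "madd M z z = z" "madd M m m' = z"
  shows "tz_equiv M S N (tz_delta (m', n)) (\<lambda>q. - tz_delta (m, n) q)"
proof -
  have "tz_equiv M S N (\<lambda>q. tz_delta (m, n) q + tz_delta (m', n) q) (tz_delta (z, n))"
    using tz_equiv_sym[OF tz_equiv_add_left[OF assms(1-3)]] assms(6) by simp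
  then have "tz_equiv M S N (\<lambda>q. tz_delta (m, n) q + tz_delta (m', n) q) (\<lambda>q. 0)"
    using tz_equiv_trans tz_equiv_delta_zero_left[OF assms(4,5,3)] by blast
  then show ?thesis unfolding tz_equiv_def by (simp add: algebra_simps)
qed

lemma tz_cls_eqI:
  assumes "tz_equiv M S N x y"
  shows "tz_cls M S N x = tz_cls M S N y"
proof -
  have "tz_equiv M S N x z \<longleftrightarrow> tz_equiv M S N y z" for z
    using assms tz_equiv_sym tz_equiv_trans by blast
  then show ?thesis by (simp add: tz_cls_def tz_equiv_def)
qed

lemma rep_tz_cls:
  assumes "x \<in> tz_free M N"
  shows "rep (tz_cls M S N x) \<in> tz_free M N" "tz_equiv M S N x (rep (tz_cls M S N x))"
proof -
  have "x \<in> tz_cls M S N x" using assms by (simp add: tz_cls_def tz_rel.zero)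
  then have "rep (tz_cls M S N x) \<in> tz_cls M S N x" unfolding rep_def by (rule someI[where P = "\<lambda>y. y \<in> tz_cls M S N x"])
  then show "rep (tz_cls M S N x) \<in> tz_free M N" "tz_equiv M S N x (rep (tz_cls M S N x))"
    by (simp_all add: tz_cls_def tz_equiv_def)
qed

lemma tensor_carrier_rep:
  assumes "X \<in> mcarrier (tensor M S N)"
  shows "rep X \<in> tz_free M N" "tz_cls M S N (rep X) = X"
proof -
  obtain x where x: "x \<in> tz_free M N" "X = tz_cls M S N x"
    using assms by (auto simp: tensor_def)
  then show "rep X \<in> tz_free M N" using rep_tz_cls(1) by blast
  have "tz_equiv M S N x (rep X)" using rep_tz_cls(2)[OF x(1)] x(2) by simp
  then show "tz_cls M S N (rep X) = X" using x(2) tz_cls_eqI[OF tz_equiv_sym] by simp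
qed

lemma add_int_multiple_closed:
  fixes y d :: "'a \<Rightarrow> int"
  assumes "Q y" and step: "\<And>x. Q x \<Longrightarrow> Q (\<lambda>q. x q + d q) \<and> Q (\<lambda>q. x q - d q)"
  shows "Q (\<lambda>q. y q + k * d q)"
proof (induction k rule: int_induct[where k = 0])
  case (step1 i)
  have "(\<lambda>q. y q + (i + 1) * d q) = (\<lambda>q. (y q + i * d q) + d q)" by (simp add: algebra_simps)
  then show ?case using step[OF step1.IH] by simp
next
  case (step2 i)
  have "(\<lambda>q. y q + (i - 1) * d q) = (\<lambda>q. (y q + i * d q) - d q)" by (simp add: algebra_simps)
  then show ?case using step[OF step2.IH] by simp
qed (simp add: assms(1))

lemma tz_free_induct [consumes 1, case_names zero step]:
  assumes x: "x \<in> tz_free M N"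
    and zero: "P (\<lambda>q. 0)"
    and step: "\<And>x p. x \<in> tz_free M N \<Longrightarrow> P x \<Longrightarrow> p \<in> mcarrier M \<times> mcarrier N
      \<Longrightarrow> P (\<lambda>q. x q + tz_delta p q) \<and> P (\<lambda>q. x q - tz_delta p q)"
  shows "P x"
proof -
  define restrict where "restrict T = (\<lambda>q. if q \<in> T then x q else 0)" for T
  have "restrict T \<in> tz_free M N \<and> P (restrict T)" if "finite T" "T \<subseteq> zsupp x" for T
    using that
  proof (induction T rule: finite_induct)
    case (insert p T)
    then have p: "p \<in> mcarrier M \<times> mcarrier N" using x by (auto simp: tz_free_iff)
    have "restrict (insert p T) = (\<lambda>q. restrict T q + x p * tz_delta p q)"
      using insert by (auto simp: restrict_def fun_eq_iff tz_delta_def)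
    moreover have "(\<lambda>q. restrict T q + x p * tz_delta p q) \<in> tz_free M N \<and> P (\<lambda>q. restrict T q + x p * tz_delta p q)"
      using insert step[OF _ _ p] tz_free_add tz_free_diff tz_free_delta[OF p]
      by (intro add_int_multiple_closed[where Q = "\<lambda>y. y \<in> tz_free M N \<and> P y"]) auto
    ultimately show ?case by simp
  qed (simp add: restrict_def zero tz_free_zero)
  moreover have "restrict (zsupp x) = x"
    by (auto simp: restrict_def zsupp_def fun_eq_iff)
  ultimately show ?thesis using finite_zsupp_free[OF x] by (metis order_refl)
qed

definition tz_span :: "('r, 's, 'm) bimod \<Rightarrow> 's alg \<Rightarrow> ('s, 't, 'n) bimod \<Rightarrow> 'j set \<Rightarrow> ('j \<Rightarrow> 'n)
    \<Rightarrow> ('m \<times> 'n \<Rightarrow> int) \<Rightarrow> bool" where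
  "tz_span M S N J e x \<longleftrightarrow>
     (\<exists>b. (\<forall>j\<in>J. b j \<in> mcarrier M) \<and> tz_equiv M S N x (\<lambda>q. \<Sum>j\<in>J. tz_delta (b j, e j) q))"

lemma tz_span_add:
  assumes add: "\<And>m m'. m \<in> mcarrier M \<Longrightarrow> m' \<in> mcarrier M \<Longrightarrow> madd M m m' \<in> mcarrier M"
    and e: "\<And>j. j \<in> J \<Longrightarrow> e j \<in> mcarrier N"
    and span: "tz_span M S N J e y" "tz_span M S N J e y'"
  shows "tz_span M S N J e (\<lambda>q. y q + y' q)"
proof -
  obtain b b' where b: "\<forall>j\<in>J. b j \<in> mcarrier M" "tz_equiv M S N y (\<lambda>q. \<Sum>j\<in>J. tz_delta (b j, e j) q)"
    and b': "\<forall>j\<in>J. b' j \<in> mcarrier M" "tz_equiv M S N y' (\<lambda>q. \<Sum>j\<in>J. tz_delta (b' j, e j) q)"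
    using span unfolding tz_span_def by blast
  have "tz_equiv M S N (\<lambda>q. \<Sum>j\<in>J. tz_delta (b j, e j) q + tz_delta (b' j, e j) q)
      (\<lambda>q. \<Sum>j\<in>J. tz_delta (madd M (b j) (b' j), e j) q)"
    using b b' e by (intro tz_equiv_sum tz_equiv_sym[OF tz_equiv_add_left]) auto
  then have "tz_equiv M S N (\<lambda>q. y q + y' q) (\<lambda>q. \<Sum>j\<in>J. tz_delta (madd M (b j) (b' j), e j) q)"
    using tz_equiv_trans[OF tz_equiv_add[OF b(2) b'(2)]] by (simp add: sum.distrib)
  then show ?thesis unfolding tz_span_def using b b' add by (intro exI[of _ "\<lambda>j. madd M (b j) (b' j)"]) auto
qed

lemma tz_span_uminus:
  assumes z: "z \<in> mcarrier M" "madd M z z = z"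
    and neg: "\<And>m. m \<in> mcarrier M \<Longrightarrow> neg m \<in> mcarrier M \<and> madd M m (neg m) = z"
    and e: "\<And>j. j \<in> J \<Longrightarrow> e j \<in> mcarrier N"
    and span: "tz_span M S N J e y"
  shows "tz_span M S N J e (\<lambda>q. - y q)"
proof -
  obtain b where b: "\<forall>j\<in>J. b j \<in> mcarrier M" "tz_equiv M S N y (\<lambda>q. \<Sum>j\<in>J. tz_delta (b j, e j) q)"
    using span unfolding tz_span_def by blast
  have "tz_equiv M S N (\<lambda>q. \<Sum>j\<in>J. - tz_delta (b j, e j) q) (\<lambda>q. \<Sum>j\<in>J. tz_delta (neg (b j), e j) q)"
    using b e neg z by (intro tz_equiv_sum tz_equiv_sym[OF tz_equiv_delta_uminus_left]) auto
  then have "tz_equiv M S N (\<lambda>q. - y q) (\<lambda>q. \<Sum>j\<in>J. tz_delta (neg (b j), e j) q)"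
    using tz_equiv_trans[OF tz_equiv_uminus[OF b(2)]] by (simp add: sum_negf)
  then show ?thesis unfolding tz_span_def using b neg by (intro exI[of _ "\<lambda>j. neg (b j)"]) auto
qed

lemma tz_spanning:
  assumes z: "z \<in> mcarrier M" "madd M z z = z"
    and neg: "\<And>m. m \<in> mcarrier M \<Longrightarrow> neg m \<in> mcarrier M \<and> madd M m (neg m) = z"
    and add: "\<And>m m'. m \<in> mcarrier M \<Longrightarrow> m' \<in> mcarrier M \<Longrightarrow> madd M m m' \<in> mcarrier M"
    and e: "\<And>j. j \<in> J \<Longrightarrow> e j \<in> mcarrier N"
    and pure: "\<And>b c. b \<in> mcarrier M \<Longrightarrow> c \<in> mcarrier N \<Longrightarrow> tz_span M S N J e (tz_delta (b, c))"
    and x: "x \<in> tz_free M N"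
  shows "tz_span M S N J e x"
  using x
proof (induction x rule: tz_free_induct)
  case zero
  have "tz_equiv M S N (\<lambda>q. \<Sum>j\<in>J. tz_delta (z, e j) q) (\<lambda>q. \<Sum>j\<in>J. 0)"
    using e by (intro tz_equiv_sum tz_equiv_delta_zero_left[OF z]) auto
  then show ?case unfolding tz_span_def using z by (intro exI[of _ "\<lambda>j. z"]) (simp add: tz_equiv_sym)
next
  case (step x p)
  then have "tz_span M S N J e (tz_delta p)" using pure[of "fst p" "snd p"] by auto
  then show ?case
    using tz_span_add[OF add e step.IH] tz_span_add[OF add e step.IH tz_span_uminus[OF z neg e]] by simp
qed

definition lin_ext :: "('m \<times> 'n \<Rightarrow> fralg) \<Rightarrow> ('m \<times> 'n \<Rightarrow> int) \<Rightarrow> fralg" where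
  "lin_ext h x = (\<Sum>p\<in>zsupp x. of_int (x p) * h p)"

lemma lin_ext_supset: "finite T \<Longrightarrow> zsupp x \<subseteq> T \<Longrightarrow> lin_ext h x = (\<Sum>p\<in>T. of_int (x p) * h p)"
  unfolding lin_ext_def by (rule sum.mono_neutral_left) (auto simp: zsupp_def)

lemma lin_ext_add:
  "finite (zsupp x) \<Longrightarrow> finite (zsupp y) \<Longrightarrow> lin_ext h (\<lambda>q. x q + y q) = lin_ext h x + lin_ext h y"
  by (subst (1 2 3) lin_ext_supset[where T = "zsupp x \<union> zsupp y"])
    (auto simp: zsupp_def sum.distrib distrib_right)

lemma lin_ext_diff:
  "finite (zsupp x) \<Longrightarrow> finite (zsupp y) \<Longrightarrow> lin_ext h (\<lambda>q. x q - y q) = lin_ext h x - lin_ext h y"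
  by (subst (1 2 3) lin_ext_supset[where T = "zsupp x \<union> zsupp y"])
    (auto simp: zsupp_def sum_subtractf left_diff_distrib)

lemma lin_ext_zero: "lin_ext h (\<lambda>q. 0) = 0"
  by (simp add: lin_ext_def zsupp_def)

lemma lin_ext_delta: "lin_ext h (tz_delta p) = h p"
  by (subst lin_ext_supset[where T = "{p}"]) (auto simp: zsupp_def tz_delta_def)

lemma lin_ext_sum_delta: "finite J \<Longrightarrow> lin_ext h (\<lambda>q. \<Sum>j\<in>J. tz_delta (p j) q) = (\<Sum>j\<in>J. h (p j))"
proof (induction J rule: finite_induct)
  case (insert a J)
  have "zsupp (\<lambda>q. \<Sum>j\<in>J. tz_delta (p j) q) \<subseteq> p ` J"
  proof
    fix q assume "q \<in> zsupp (\<lambda>q. \<Sum>j\<in>J. tz_delta (p j) q)"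
    then have "(\<Sum>j\<in>J. tz_delta (p j) q) \<noteq> 0" by (simp add: zsupp_def)
    then obtain j where "j \<in> J" "tz_delta (p j) q \<noteq> 0" by (meson sum.neutral)
    then show "q \<in> p ` J" by (auto simp: tz_delta_def split: if_splits)
  qed
  then have "finite (zsupp (\<lambda>q. \<Sum>j\<in>J. tz_delta (p j) q))" using insert by (auto intro: finite_subset)
  then have "lin_ext h (\<lambda>q. tz_delta (p a) q + (\<Sum>j\<in>J. tz_delta (p j) q))
      = h (p a) + lin_ext h (\<lambda>q. \<Sum>j\<in>J. tz_delta (p j) q)"
    using lin_ext_add[OF finite_zsupp_delta] by (simp add: lin_ext_delta)
  then show ?case using insert by simp
qed (simp add: lin_ext_zero)

lemma lin_ext_map:
  assumes "finite (zsupp x)"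
  shows "lin_ext h (tz_map f x) = lin_ext (\<lambda>p. h (f p)) x"
proof -
  have "lin_ext h (tz_map f x) = (\<Sum>q\<in>f ` zsupp x. of_int (tz_map f x q) * h q)"
    using assms zsupp_tz_map by (intro lin_ext_supset) auto
  also have "\<dots> = (\<Sum>q\<in>f ` zsupp x. \<Sum>p\<in>{p \<in> zsupp x. f p = q}. of_int (x p) * h (f p))"
    by (intro sum.cong refl) (simp add: tz_map_def zsupp_def sum_distrib_right)
  also have "\<dots> = (\<Sum>p\<in>zsupp x. of_int (x p) * h (f p))"
    by (rule sum.group) (use assms in auto)
  finally show ?thesis by (simp add: lin_ext_def)
qed

lemma lin_ext_mult_left: "y * lin_ext h x = lin_ext (\<lambda>p. y * h p) x"
  unfolding lin_ext_def sum_distrib_left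
  by (rule sum.cong[OF refl]) (metis mult.assoc mult_of_int_commute)

lemma lin_ext_mult_right: "lin_ext h x * y = lin_ext (\<lambda>p. h p * y) x"
  unfolding lin_ext_def sum_distrib_right by (simp add: mult.assoc)

lemma lin_ext_free_below: "(\<And>p. p \<in> zsupp x \<Longrightarrow> h p \<in> free_below n) \<Longrightarrow> lin_ext h x \<in> free_below n"
  unfolding lin_ext_def by (intro free_on_sum free_on_mult free_on_of_int) auto

lemma lin_ext_cong:
  "(\<And>p. p \<in> zsupp x \<Longrightarrow> h p - h' p \<in> rel_ideal n) \<Longrightarrow> lin_ext h x - lin_ext h' x \<in> rel_ideal n"
proof -
  assume "\<And>p. p \<in> zsupp x \<Longrightarrow> h p - h' p \<in> rel_ideal n"
  then have "(\<Sum>p\<in>zsupp x. of_int (x p) * (h p - h' p)) \<in> rel_ideal n"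
    by (intro rel_ideal_sum rel_ideal_mult_left free_on_of_int) auto
  then show ?thesis by (simp add: lin_ext_def right_diff_distrib sum_subtractf)
qed

definition tz_compatible ::
  "('r, 's, 'm) bimod \<Rightarrow> 's alg \<Rightarrow> ('s, 't, 'n) bimod \<Rightarrow> nat \<Rightarrow> ('m \<times> 'n \<Rightarrow> fralg) \<Rightarrow> bool" where
  "tz_compatible M S N K h \<longleftrightarrow>
     (\<forall>m\<in>mcarrier M. \<forall>m'\<in>mcarrier M. \<forall>n\<in>mcarrier N.
        h (madd M m m', n) - h (m, n) - h (m', n) \<in> rel_ideal K)
   \<and> (\<forall>m\<in>mcarrier M. \<forall>n\<in>mcarrier N. \<forall>n'\<in>mcarrier N.
        h (m, madd N n n') - h (m, n) - h (m, n') \<in> rel_ideal K)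
   \<and> (\<forall>m\<in>mcarrier M. \<forall>s\<in>acarrier S. \<forall>n\<in>mcarrier N.
        h (ract M m s, n) - h (m, lact N s n) \<in> rel_ideal K)"

lemma lin_ext_tz_equiv:
  assumes h: "tz_compatible M S N K h"
    and equiv: "tz_equiv M S N x y" and fin: "finite (zsupp x)" "finite (zsupp y)"
  shows "lin_ext h x - lin_ext h y \<in> rel_ideal K"
proof -
  have gens: "lin_ext h g \<in> rel_ideal K" if "g \<in> tz_gens M S N" for g
    using that h unfolding tz_gens_def tz_compatible_def
    by (elim UnE CollectE exE conjE)
      (simp_all add: lin_ext_diff finite_zsupp_delta finite_zsupp_diff lin_ext_delta)
  have "lin_ext h r \<in> rel_ideal K" if "r \<in> tz_rel M S N" for r
    using that
  proof (induction r rule: tz_rel.induct)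
    case (plus r g)
    have "lin_ext h (\<lambda>q. r q + g q) = lin_ext h r + lin_ext h g"
      by (rule lin_ext_add[OF finite_zsupp_rel[OF plus.hyps(1)] finite_zsupp_gen[OF plus.hyps(2)]])
    then show ?case using plus.IH gens[OF plus.hyps(2)] by (simp add: rel_ideal_add)
  next
    case (minus r g)
    have "lin_ext h (\<lambda>q. r q - g q) = lin_ext h r - lin_ext h g"
      by (rule lin_ext_diff[OF finite_zsupp_rel[OF minus.hyps(1)] finite_zsupp_gen[OF minus.hyps(2)]])
    then show ?case using minus.IH gens[OF minus.hyps(2)] by (simp add: rel_ideal_diff)
  qed (simp add: lin_ext_zero)
  then have "lin_ext h (\<lambda>q. x q - y q) \<in> rel_ideal K" using equiv unfolding tz_equiv_def by blast
  then show ?thesis using fin by (simp add: lin_ext_diff)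
qed

lemma lin_ext_rep_tz_cls:
  assumes "tz_compatible M S N K h" "x \<in> tz_free M N"
  shows "lin_ext h (rep (tz_cls M S N x)) - lin_ext h x \<in> rel_ideal K"
  using lin_ext_tz_equiv[OF assms(1) tz_equiv_sym[OF rep_tz_cls(2)[OF assms(2)]]]
    finite_zsupp_free rep_tz_cls(1) assms(2) by blast

lemma lin_ext_map_cong:
  assumes "finite (zsupp x)" "\<And>p. p \<in> zsupp x \<Longrightarrow> h (f p) - h' p \<in> rel_ideal K"
  shows "lin_ext h (tz_map f x) - lin_ext h' x \<in> rel_ideal K"
  using lin_ext_cong[of x "\<lambda>p. h (f p)" h' K] assms by (simp add: lin_ext_map)

section \<open>Bimodule isomorphisms\<close>

definition bimod_closed :: "'r alg \<Rightarrow> 's alg \<Rightarrow> ('r, 's, 'm) bimod \<Rightarrow> bool" where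
  "bimod_closed R S M \<longleftrightarrow> (\<forall>x\<in>mcarrier M. \<forall>y\<in>mcarrier M. madd M x y \<in> mcarrier M)
     \<and> (\<forall>r\<in>acarrier R. \<forall>x\<in>mcarrier M. lact M r x \<in> mcarrier M)
     \<and> (\<forall>s\<in>acarrier S. \<forall>x\<in>mcarrier M. ract M x s \<in> mcarrier M)"

lemma regbimod_simps [simp]:
  "mcarrier (regbimod A \<phi> \<psi>) = acarrier A"
  "madd (regbimod A \<phi> \<psi>) = aadd A"
  "lact (regbimod A \<phi> \<psi>) r a = amul A (\<phi> r) a"
  "ract (regbimod A \<phi> \<psi>) a s = amul A a (\<psi> s)"
  by (simp_all add: regbimod_def)

lemma tensor_simps [simp]:
  "mcarrier (tensor M S N) = tz_cls M S N ` tz_free M N"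
  "madd (tensor M S N) X Y = tz_cls M S N (\<lambda>q. rep X q + rep Y q)"
  "lact (tensor M S N) r X = tz_cls M S N (tz_map (\<lambda>(m, n). (lact M r m, n)) (rep X))"
  "ract (tensor M S N) X t = tz_cls M S N (tz_map (\<lambda>(m, n). (m, ract N n t)) (rep X))"
  by (simp_all add: tensor_def)

lemma dsum_simps [simp]:
  "mcarrier (dsum M N) = mcarrier M \<times> mcarrier N"
  "madd (dsum M N) (x, y) (x', y') = (madd M x x', madd N y y')"
  "lact (dsum M N) r (x, y) = (lact M r x, lact N r y)"
  "ract (dsum M N) (x, y) s = (ract M x s, ract N y s)"
  by (simp_all add: dsum_def)

lemma zero_bimod_simps [simp]:
  "mcarrier zero_bimod = {undefined}" "madd zero_bimod x y = undefined"
  "lact zero_bimod r x = undefined" "ract zero_bimod x s = undefined"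
  by (simp_all add: zero_bimod_def)

lemma bimod_closed_dsum: "bimod_closed R S M \<Longrightarrow> bimod_closed R S N \<Longrightarrow> bimod_closed R S (dsum M N)"
  unfolding bimod_closed_def by auto

lemma bimod_closed_zero: "bimod_closed R S zero_bimod"
  by (simp add: bimod_closed_def)

lemma bimod_closed_tensor:
  assumes "bimod_closed R S M" "bimod_closed S T N"
  shows "bimod_closed R T (tensor M S N)"
  unfolding bimod_closed_def
proof (intro conjI ballI)
  fix X Y assume "X \<in> mcarrier (tensor M S N)" "Y \<in> mcarrier (tensor M S N)"
  then have "rep X \<in> tz_free M N" "rep Y \<in> tz_free M N" by (simp_all only: tensor_carrier_rep(1))
  then show "madd (tensor M S N) X Y \<in> mcarrier (tensor M S N)" by (simp add: tz_free_add)
next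
  fix r X assume r: "r \<in> acarrier R" and X: "X \<in> mcarrier (tensor M S N)"
  from X have "rep X \<in> tz_free M N" by (rule tensor_carrier_rep(1))
  then have "tz_map (\<lambda>(m, n). (lact M r m, n)) (rep X) \<in> tz_free M N"
    using assms(1) r unfolding bimod_closed_def by (intro tz_free_map) auto
  then show "lact (tensor M S N) r X \<in> mcarrier (tensor M S N)" by simp
next
  fix t X assume t: "t \<in> acarrier T" and X: "X \<in> mcarrier (tensor M S N)"
  from X have "rep X \<in> tz_free M N" by (rule tensor_carrier_rep(1))
  then have "tz_map (\<lambda>(m, n). (m, ract N n t)) (rep X) \<in> tz_free M N"
    using assms(2) t unfolding bimod_closed_def by (intro tz_free_map) auto
  then show "ract (tensor M S N) X t \<in> mcarrier (tensor M S N)" by simp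
qed

lemma bimod_iso_trans: "bimod_iso R S M N \<Longrightarrow> bimod_iso R S N P \<Longrightarrow> bimod_iso R S M P"
proof -
  assume "bimod_iso R S M N" "bimod_iso R S N P"
  then obtain f g where f: "bij_betw f (mcarrier M) (mcarrier N)"
      "\<forall>x\<in>mcarrier M. \<forall>y\<in>mcarrier M. f (madd M x y) = madd N (f x) (f y)"
      "\<forall>r\<in>acarrier R. \<forall>x\<in>mcarrier M. f (lact M r x) = lact N r (f x)"
      "\<forall>s\<in>acarrier S. \<forall>x\<in>mcarrier M. f (ract M x s) = ract N (f x) s"
    and g: "bij_betw g (mcarrier N) (mcarrier P)"
      "\<forall>x\<in>mcarrier N. \<forall>y\<in>mcarrier N. g (madd N x y) = madd P (g x) (g y)"
      "\<forall>r\<in>acarrier R. \<forall>x\<in>mcarrier N. g (lact N r x) = lact P r (g x)"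
      "\<forall>s\<in>acarrier S. \<forall>x\<in>mcarrier N. g (ract N x s) = ract P (g x) s"
    unfolding bimod_iso_def by blast
  moreover have "\<And>x. x \<in> mcarrier M \<Longrightarrow> f x \<in> mcarrier N" using f(1) bij_betwE by blast
  ultimately show ?thesis
    unfolding bimod_iso_def by (intro exI[of _ "g \<circ> f"]) (simp add: bij_betw_trans)
qed

lemma bimod_iso_sym:
  assumes "bimod_iso R S M N" and closed: "bimod_closed R S M"
  shows "bimod_iso R S N M"
proof -
  obtain f where f: "bij_betw f (mcarrier M) (mcarrier N)"
      "\<forall>x\<in>mcarrier M. \<forall>y\<in>mcarrier M. f (madd M x y) = madd N (f x) (f y)"
      "\<forall>r\<in>acarrier R. \<forall>x\<in>mcarrier M. f (lact M r x) = lact N r (f x)"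
      "\<forall>s\<in>acarrier S. \<forall>x\<in>mcarrier M. f (ract M x s) = ract N (f x) s"
    using assms(1) unfolding bimod_iso_def by blast
  define g where "g = inv_into (mcarrier M) f"
  have g: "bij_betw g (mcarrier N) (mcarrier M)"
    unfolding g_def by (rule bij_betw_inv_into[OF f(1)])
  then have gM: "\<And>a. a \<in> mcarrier N \<Longrightarrow> g a \<in> mcarrier M" using bij_betwE by blast
  have fg: "\<And>a. a \<in> mcarrier N \<Longrightarrow> f (g a) = a" and gf: "\<And>x. x \<in> mcarrier M \<Longrightarrow> g (f x) = x"
    unfolding g_def using f(1) by (simp_all add: bij_betw_inv_into_right bij_betw_inv_into_left)
  show ?thesis unfolding bimod_iso_def
  proof (intro exI[of _ g] conjI ballI)
    fix a b assume "a \<in> mcarrier N" "b \<in> mcarrier N"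
    then show "g (madd N a b) = madd M (g a) (g b)"
      using f(2) gM fg gf closed unfolding bimod_closed_def by metis
  next
    fix r a assume "r \<in> acarrier R" "a \<in> mcarrier N"
    then show "g (lact N r a) = lact M r (g a)"
      using f(3) gM fg gf closed unfolding bimod_closed_def by metis
  next
    fix s a assume "s \<in> acarrier S" "a \<in> mcarrier N"
    then show "g (ract N a s) = ract M (g a) s"
      using f(4) gM fg gf closed unfolding bimod_closed_def by metis
  qed (rule g)
qed

section \<open>Multiplication identifies \<open>D\<^sub>n\<^sub>+\<^sub>1 \<otimes> X\<^sub>n\<close> with \<open>A\<^sub>n\<^sub>+\<^sub>1\<close>\<close>

lemma Xmod_simps [simp]:
  "mcarrier (Xmod n) = Acar (Suc n)" "madd (Xmod n) = aadd (nilcox (Suc n))"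
  "lact (Xmod n) r a = amul (nilcox (Suc n)) r a"
  "ract (Xmod n) a s = amul (nilcox (Suc n)) a (nc_chi n s)"
  by (simp_all add: Xmod_def)

lemma Dmod_Suc_simps [simp]:
  "mcarrier (Dmod (Suc n)) = Acar (Suc n)" "madd (Dmod (Suc n)) = aadd (nilcox (Suc n))"
  "lact (Dmod (Suc n)) r a = amul (nilcox (Suc n)) (nc_chi n r) a"
  "ract (Dmod (Suc n)) a s = amul (nilcox (Suc n)) a s"
  by (simp_all add: Dmod_def)

lemma bimod_closed_regbimod:
  assumes "\<And>r. r \<in> acarrier R \<Longrightarrow> \<phi> r \<in> Acar k" "\<And>s. s \<in> acarrier S \<Longrightarrow> \<psi> s \<in> Acar k"
  shows "bimod_closed R S (regbimod (nilcox k) \<phi> \<psi>)"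
  using assms by (simp add: bimod_closed_def aadd_closed amul_closed)

lemma tz_spanning_nilcox:
  assumes M: "mcarrier M = Acar k" "madd M = aadd (nilcox k)"
    and e: "\<And>j. j \<in> J \<Longrightarrow> e j \<in> mcarrier N"
    and pure: "\<And>b c. b \<in> mcarrier M \<Longrightarrow> c \<in> mcarrier N \<Longrightarrow> tz_span M S N J e (tz_delta (b, c))"
    and x: "x \<in> tz_free M N"
  shows "tz_span M S N J e x"
proof (rule tz_spanning[where z = "azero (nilcox k)" and neg = "\<lambda>a. cls k (- repr a)", OF _ _ _ _ e pure x])
  show "azero (nilcox k) \<in> mcarrier M" "madd M (azero (nilcox k)) (azero (nilcox k)) = azero (nilcox k)"
    using M azero_closed by (simp_all add: azero_cls aadd_cls)
  show "madd M m m' \<in> mcarrier M" if "m \<in> mcarrier M" "m' \<in> mcarrier M" for m m'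
    using M that aadd_closed by simp
  show "cls k (- repr m) \<in> mcarrier M \<and> madd M m (cls k (- repr m)) = azero (nilcox k)"
    if m: "m \<in> mcarrier M" for m
  proof -
    have m': "m \<in> Acar k" using M m by simp
    have minus: "- repr m \<in> free_below k" using repr_free_below[OF m'] by blast
    have "aadd (nilcox k) (cls k (repr m)) (cls k (- repr m)) = cls k (repr m + - repr m)"
      by (rule aadd_cls[OF repr_free_below[OF m'] minus])
    then show ?thesis using M cls_in_carrier[OF minus] cls_repr[OF m'] by (simp add: azero_cls)
  qed
qed

definition mult_pair :: "fa set \<times> fa set \<Rightarrow> fralg" where
  "mult_pair p = repr (fst p) * repr (snd p)"

definition mult_map :: "nat \<Rightarrow> (fa set \<times> fa set \<Rightarrow> int) set \<Rightarrow> fa set" where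
  "mult_map n X = cls (Suc n) (lin_ext mult_pair (rep X))"

lemma mult_pair_compatible: "tz_compatible (Dmod (Suc n)) (nilcox (Suc n)) (Xmod n) (Suc n) mult_pair"
  unfolding tz_compatible_def
proof (intro conjI ballI)
  fix m m' k assume "m \<in> mcarrier (Dmod (Suc n))" "m' \<in> mcarrier (Dmod (Suc n))" "k \<in> mcarrier (Xmod n)"
  then have "(repr (aadd (nilcox (Suc n)) m m') - (repr m + repr m')) * repr k \<in> rel_ideal (Suc n)"
    by (intro rel_ideal_mult_right repr_aadd repr_free_below) simp_all
  then show "mult_pair (madd (Dmod (Suc n)) m m', k) - mult_pair (m, k) - mult_pair (m', k) \<in> rel_ideal (Suc n)"
    by (simp add: mult_pair_def algebra_simps)
next
  fix m k k' assume "m \<in> mcarrier (Dmod (Suc n))" "k \<in> mcarrier (Xmod n)" "k' \<in> mcarrier (Xmod n)"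
  then have "repr m * (repr (aadd (nilcox (Suc n)) k k') - (repr k + repr k')) \<in> rel_ideal (Suc n)"
    by (intro rel_ideal_mult_left repr_aadd repr_free_below) simp_all
  then show "mult_pair (m, madd (Xmod n) k k') - mult_pair (m, k) - mult_pair (m, k') \<in> rel_ideal (Suc n)"
    by (simp add: mult_pair_def algebra_simps)
next
  fix m s k assume "m \<in> mcarrier (Dmod (Suc n))" "s \<in> acarrier (nilcox (Suc n))" "k \<in> mcarrier (Xmod n)"
  then have "(repr (amul (nilcox (Suc n)) m s) - repr m * repr s) * repr k
      - repr m * (repr (amul (nilcox (Suc n)) s k) - repr s * repr k) \<in> rel_ideal (Suc n)"
    by (intro rel_ideal_diff rel_ideal_mult_right rel_ideal_mult_left repr_amul repr_free_below) simp_all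
  then show "mult_pair (ract (Dmod (Suc n)) m s, k) - mult_pair (m, lact (Xmod n) s k) \<in> rel_ideal (Suc n)"
    by (simp add: mult_pair_def algebra_simps)
qed

lemma lin_ext_mult_pair_free_below:
  assumes "x \<in> tz_free (Dmod (Suc n)) (Xmod n)"
  shows "lin_ext mult_pair x \<in> free_below (Suc n)"
proof (rule lin_ext_free_below)
  fix p assume "p \<in> zsupp x"
  then have "fst p \<in> Acar (Suc n)" "snd p \<in> Acar (Suc n)" using zsupp_tz_free[OF assms] by auto
  then show "mult_pair p \<in> free_below (Suc n)" unfolding mult_pair_def by (intro free_on_mult repr_free_below)
qed

lemma mult_map_cls:
  "x \<in> tz_free (Dmod (Suc n)) (Xmod n)
   \<Longrightarrow> mult_map n (tz_cls (Dmod (Suc n)) (nilcox (Suc n)) (Xmod n) x) = cls (Suc n) (lin_ext mult_pair x)"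
  unfolding mult_map_def by (intro cls_eqI lin_ext_rep_tz_cls mult_pair_compatible)

lemma mult_map_carrier:
  "X \<in> mcarrier (tensor (Dmod (Suc n)) (nilcox (Suc n)) (Xmod n)) \<Longrightarrow> mult_map n X \<in> Acar (Suc n)"
  unfolding mult_map_def by (intro cls_in_carrier lin_ext_mult_pair_free_below tensor_carrier_rep(1))

lemma mult_map_pure:
  assumes "a \<in> Acar (Suc n)"
  shows "mult_map n (tz_cls (Dmod (Suc n)) (nilcox (Suc n)) (Xmod n) (tz_delta (a, aone (nilcox (Suc n))))) = a"
proof -
  have "tz_delta (a, aone (nilcox (Suc n))) \<in> tz_free (Dmod (Suc n)) (Xmod n)"
    using assms aone_closed by (intro tz_free_delta) auto
  then have "mult_map n (tz_cls (Dmod (Suc n)) (nilcox (Suc n)) (Xmod n) (tz_delta (a, aone (nilcox (Suc n)))))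
      = cls (Suc n) (repr a * repr (aone (nilcox (Suc n))))"
    by (simp add: mult_map_cls lin_ext_delta mult_pair_def)
  also have "\<dots> = cls (Suc n) (repr a)"
    using rel_ideal_mult_left[OF repr_free_below[OF assms] repr_aone] by (intro cls_eqI) (simp add: algebra_simps)
  finally show ?thesis using cls_repr[OF assms] by simp
qed

lemma tensor_mult_pure:
  assumes "x \<in> tz_free (Dmod (Suc n)) (Xmod n)"
  obtains a where "a \<in> Acar (Suc n)"
    "tz_equiv (Dmod (Suc n)) (nilcox (Suc n)) (Xmod n) x (tz_delta (a, aone (nilcox (Suc n))))"
proof -
  let ?A = "nilcox (Suc n)"
  have pure: "tz_span (Dmod (Suc n)) ?A (Xmod n) {()} (\<lambda>_. aone ?A) (tz_delta (b, c))"
    if "b \<in> mcarrier (Dmod (Suc n))" "c \<in> mcarrier (Xmod n)" for b c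
  proof -
    have b: "b \<in> Acar (Suc n)" and c: "c \<in> Acar (Suc n)" using that by simp_all
    have "tz_equiv (Dmod (Suc n)) ?A (Xmod n) (tz_delta (ract (Dmod (Suc n)) b c, aone ?A))
        (tz_delta (b, lact (Xmod n) c (aone ?A)))"
      by (rule tz_equiv_balanced) (simp_all add: b c aone_closed)
    then have "tz_equiv (Dmod (Suc n)) ?A (Xmod n) (tz_delta (b, c)) (tz_delta (amul ?A b c, aone ?A))"
      using amul_aone[OF c] by (simp add: tz_equiv_sym)
    then show ?thesis
      unfolding tz_span_def using amul_closed[OF b c] by (intro exI[of _ "\<lambda>_. amul ?A b c"]) simp
  qed
  have "tz_span (Dmod (Suc n)) ?A (Xmod n) {()} (\<lambda>_. aone ?A) x"
    by (rule tz_spanning_nilcox[OF _ _ _ pure assms]) (simp_all add: aone_closed)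
  then show ?thesis using that unfolding tz_span_def by auto
qed

lemma mult_map_bij:
  "bij_betw (mult_map n) (mcarrier (tensor (Dmod (Suc n)) (nilcox (Suc n)) (Xmod n))) (Acar (Suc n))"
proof -
  let ?T = "tensor (Dmod (Suc n)) (nilcox (Suc n)) (Xmod n)"
  let ?pure = "\<lambda>a. tz_cls (Dmod (Suc n)) (nilcox (Suc n)) (Xmod n) (tz_delta (a, aone (nilcox (Suc n))))"
  have is_pure: "\<exists>a\<in>Acar (Suc n). X = ?pure a" if X: "X \<in> mcarrier ?T" for X
  proof -
    obtain a where a: "a \<in> Acar (Suc n)" and equiv: "tz_equiv (Dmod (Suc n)) (nilcox (Suc n)) (Xmod n) (rep X)
        (tz_delta (a, aone (nilcox (Suc n))))"
      by (rule tensor_mult_pure[OF tensor_carrier_rep(1)[OF X]])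
    have "X = ?pure a" using tz_cls_eqI[OF equiv] tensor_carrier_rep(2)[OF X] by simp
    with a show ?thesis by blast
  qed
  show ?thesis
  proof (rule bij_betw_imageI)
    show "inj_on (mult_map n) (mcarrier ?T)"
    proof (rule inj_onI)
      fix X Y assume "X \<in> mcarrier ?T" "Y \<in> mcarrier ?T" "mult_map n X = mult_map n Y"
      then show "X = Y" using is_pure mult_map_pure by metis
    qed
    show "mult_map n ` mcarrier ?T = Acar (Suc n)"
    proof
      show "mult_map n ` mcarrier ?T \<subseteq> Acar (Suc n)" using mult_map_carrier by blast
      show "Acar (Suc n) \<subseteq> mult_map n ` mcarrier ?T"
      proof
        fix a assume a: "a \<in> Acar (Suc n)"
        then have "?pure a \<in> mcarrier ?T" using aone_closed by (simp add: tz_free_delta)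
        then show "a \<in> mult_map n ` mcarrier ?T" using mult_map_pure[OF a] by (metis image_eqI)
      qed
    qed
  qed
qed

lemma mult_map_add:
  assumes "X \<in> mcarrier (tensor (Dmod (Suc n)) (nilcox (Suc n)) (Xmod n))"
    and "Y \<in> mcarrier (tensor (Dmod (Suc n)) (nilcox (Suc n)) (Xmod n))"
  shows "mult_map n (madd (tensor (Dmod (Suc n)) (nilcox (Suc n)) (Xmod n)) X Y)
    = aadd (nilcox (Suc n)) (mult_map n X) (mult_map n Y)"
proof -
  have x: "rep X \<in> tz_free (Dmod (Suc n)) (Xmod n)" "rep Y \<in> tz_free (Dmod (Suc n)) (Xmod n)"
    using tensor_carrier_rep(1) assms by blast+
  then have "mult_map n (madd (tensor (Dmod (Suc n)) (nilcox (Suc n)) (Xmod n)) X Y)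
      = cls (Suc n) (lin_ext mult_pair (rep X) + lin_ext mult_pair (rep Y))"
    by (simp add: mult_map_cls tz_free_add lin_ext_add finite_zsupp_free)
  also have "\<dots> = aadd (nilcox (Suc n)) (mult_map n X) (mult_map n Y)"
    using aadd_cls[OF lin_ext_mult_pair_free_below[OF x(1)] lin_ext_mult_pair_free_below[OF x(2)]]
    by (simp add: mult_map_def)
  finally show ?thesis .
qed

lemma mult_map_lact:
  assumes r: "r \<in> acarrier (nilcox n)" and X: "X \<in> mcarrier (tensor (Dmod (Suc n)) (nilcox (Suc n)) (Xmod n))"
  shows "mult_map n (lact (tensor (Dmod (Suc n)) (nilcox (Suc n)) (Xmod n)) r X)
    = amul (nilcox (Suc n)) (nc_chi n r) (mult_map n X)"
proof -
  let ?c = "nc_chi n r"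
  let ?f = "\<lambda>(m, k). (amul (nilcox (Suc n)) ?c m, k)"
  have x: "rep X \<in> tz_free (Dmod (Suc n)) (Xmod n)" by (rule tensor_carrier_rep(1)[OF X])
  have c: "?c \<in> Acar (Suc n)" by (rule chi_closed[OF r])
  have "tz_map ?f (rep X) \<in> tz_free (Dmod (Suc n)) (Xmod n)"
    using x c amul_closed by (intro tz_free_map) auto
  then have "mult_map n (lact (tensor (Dmod (Suc n)) (nilcox (Suc n)) (Xmod n)) r X)
      = cls (Suc n) (lin_ext mult_pair (tz_map ?f (rep X)))"
    by (simp add: mult_map_cls)
  also have "\<dots> = cls (Suc n) (lin_ext (\<lambda>p. repr ?c * mult_pair p) (rep X))"
  proof (rule cls_eqI, rule lin_ext_map_cong[OF finite_zsupp_free[OF x]])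
    fix p assume "p \<in> zsupp (rep X)"
    then have p: "fst p \<in> Acar (Suc n)" "snd p \<in> Acar (Suc n)" using zsupp_tz_free[OF x] by auto
    have "(repr (amul (nilcox (Suc n)) ?c (fst p)) - repr ?c * repr (fst p)) * repr (snd p) \<in> rel_ideal (Suc n)"
      by (rule rel_ideal_mult_right[OF repr_free_below[OF p(2)] repr_amul[OF c p(1)]])
    then show "mult_pair (?f p) - repr ?c * mult_pair p \<in> rel_ideal (Suc n)"
      by (cases p) (simp add: mult_pair_def algebra_simps)
  qed
  also have "\<dots> = amul (nilcox (Suc n)) ?c (mult_map n X)"
    using amul_cls[OF repr_free_below[OF c] lin_ext_mult_pair_free_below[OF x]] cls_repr[OF c]
    by (simp add: mult_map_def lin_ext_mult_left)
  finally show ?thesis .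
qed

lemma mult_map_ract:
  assumes s: "s \<in> acarrier (nilcox n)" and X: "X \<in> mcarrier (tensor (Dmod (Suc n)) (nilcox (Suc n)) (Xmod n))"
  shows "mult_map n (ract (tensor (Dmod (Suc n)) (nilcox (Suc n)) (Xmod n)) X s)
    = amul (nilcox (Suc n)) (mult_map n X) (nc_chi n s)"
proof -
  let ?c = "nc_chi n s"
  let ?f = "\<lambda>(m, k). (m, amul (nilcox (Suc n)) k ?c)"
  have x: "rep X \<in> tz_free (Dmod (Suc n)) (Xmod n)" by (rule tensor_carrier_rep(1)[OF X])
  have c: "?c \<in> Acar (Suc n)" by (rule chi_closed[OF s])
  have "tz_map ?f (rep X) \<in> tz_free (Dmod (Suc n)) (Xmod n)"
    using x c amul_closed by (intro tz_free_map) auto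
  then have "mult_map n (ract (tensor (Dmod (Suc n)) (nilcox (Suc n)) (Xmod n)) X s)
      = cls (Suc n) (lin_ext mult_pair (tz_map ?f (rep X)))"
    by (simp add: mult_map_cls)
  also have "\<dots> = cls (Suc n) (lin_ext (\<lambda>p. mult_pair p * repr ?c) (rep X))"
  proof (rule cls_eqI, rule lin_ext_map_cong[OF finite_zsupp_free[OF x]])
    fix p assume "p \<in> zsupp (rep X)"
    then have p: "fst p \<in> Acar (Suc n)" "snd p \<in> Acar (Suc n)" using zsupp_tz_free[OF x] by auto
    have "repr (fst p) * (repr (amul (nilcox (Suc n)) (snd p) ?c) - repr (snd p) * repr ?c) \<in> rel_ideal (Suc n)"
      by (rule rel_ideal_mult_left[OF repr_free_below[OF p(1)] repr_amul[OF p(2) c]])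
    then show "mult_pair (?f p) - mult_pair p * repr ?c \<in> rel_ideal (Suc n)"
      by (cases p) (simp add: mult_pair_def algebra_simps)
  qed
  also have "\<dots> = amul (nilcox (Suc n)) (mult_map n X) ?c"
    using amul_cls[OF lin_ext_mult_pair_free_below[OF x] repr_free_below[OF c]] cls_repr[OF c]
    by (simp add: mult_map_def lin_ext_mult_right)
  finally show ?thesis .
qed

theorem mult_map_iso:
  "bimod_iso (nilcox n) (nilcox n) (tensor (Dmod (Suc n)) (nilcox (Suc n)) (Xmod n))
     (regbimod (nilcox (Suc n)) (nc_chi n) (nc_chi n))"
  unfolding bimod_iso_def using mult_map_bij mult_map_add mult_map_lact mult_map_ract
  by (intro exI[of _ "mult_map n"]) simp

section \<open>Splitting \<open>A\<^sub>m\<^sub>+\<^sub>2\<close> as \<open>A\<^sub>m\<^sub>+\<^sub>1 \<oplus> (X\<^sub>m \<otimes> D\<^sub>m\<^sub>+\<^sub>1)\<close>\<close>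

definition glue_pair :: "nat \<Rightarrow> fa set \<times> fa set \<Rightarrow> fralg" where
  "glue_pair m p = repr (fst p) * mon [Suc m] * repr (snd p)"

definition glue_map :: "nat \<Rightarrow> fa set \<times> (fa set \<times> fa set \<Rightarrow> int) set \<Rightarrow> fa set" where
  "glue_map m p = cls (Suc (Suc m)) (repr (fst p) + lin_ext (glue_pair m) (rep (snd p)))"

text \<open>The basis \<open>Y\<^sub>m \<dots> Y\<^sub>j\<close> of \<open>D\<^sub>m\<^sub>+\<^sub>1\<close> as a left \<open>A\<^sub>m\<close>-module.\<close>

definition desc_elem :: "nat \<Rightarrow> nat \<Rightarrow> fa set" where
  "desc_elem m j = cls (Suc m) (mon (desc_word j m))"

lemma desc_elem_carrier: "1 \<le> j \<Longrightarrow> desc_elem m j \<in> Acar (Suc m)"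
  unfolding desc_elem_def by (intro cls_in_carrier mon_desc_word_free_below)

lemma repr_free_below_Suc: "a \<in> Acar n \<Longrightarrow> repr a \<in> free_below (Suc n)"
  using repr_free_below free_below_Suc by blast

lemma mon_top_letter_free_below: "mon [Suc m] \<in> free_below (Suc (Suc m))"
  by (intro free_on_mon) auto

lemma glue_pair_balanced:
  assumes b: "b \<in> Acar (Suc m)" and s: "s \<in> Acar m" and c: "c \<in> Acar (Suc m)"
  shows "glue_pair m (amul (nilcox (Suc m)) b (nc_chi m s), c) - glue_pair m (b, amul (nilcox (Suc m)) (nc_chi m s) c)
    \<in> rel_ideal (Suc (Suc m))"
proof -
  let ?s = "nc_chi m s" and ?Y = "mon [Suc m]"
  have s': "?s \<in> Acar (Suc m)" using chi_closed[OF s] .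
  have B: "repr b \<in> free_below (Suc (Suc m))" using repr_free_below_Suc[OF b] .
  have C: "repr c \<in> free_below (Suc (Suc m))" using repr_free_below_Suc[OF c] .
  have Y: "?Y \<in> free_below (Suc (Suc m))" by (rule mon_top_letter_free_below)
  have chi: "repr ?s - repr s \<in> rel_ideal (Suc (Suc m))" using rel_ideal_Suc[OF repr_chi[OF s]] .
  text \<open>Replace \<open>b \<chi>(s)\<close> by \<open>b s\<close>, commute \<open>s\<close> with \<open>Y\<^sub>m\<^sub>+\<^sub>1\<close>, and replace \<open>s c\<close> by \<open>\<chi>(s) c\<close>.\<close>
  have "(repr (amul (nilcox (Suc m)) b ?s) - repr b * repr ?s) * ?Y * repr c \<in> rel_ideal (Suc (Suc m))"
    using rel_ideal_Suc[OF repr_amul[OF _ s']] b by (intro rel_ideal_mult_right[OF C] rel_ideal_mult_right[OF Y]) simp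
  moreover have "repr b * (repr ?s - repr s) * ?Y * repr c \<in> rel_ideal (Suc (Suc m))"
    by (intro rel_ideal_mult_right[OF C] rel_ideal_mult_right[OF Y] rel_ideal_mult_left[OF B] chi)
  moreover have "repr b * (repr s * ?Y - ?Y * repr s) * repr c \<in> rel_ideal (Suc (Suc m))"
    by (intro rel_ideal_mult_right[OF C] rel_ideal_mult_left[OF B] top_letter_commute repr_free_below s)
  moreover have "repr b * ?Y * (repr s - repr ?s) * repr c \<in> rel_ideal (Suc (Suc m))"
    by (intro rel_ideal_mult_right[OF C] rel_ideal_mult_left[OF free_on_mult[OF B Y]] rel_ideal_diff_sym[OF chi])
  moreover have "repr b * ?Y * (repr ?s * repr c - repr (amul (nilcox (Suc m)) ?s c)) \<in> rel_ideal (Suc (Suc m))"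
    using rel_ideal_diff_sym[OF rel_ideal_Suc[OF repr_amul[OF s']]] c
    by (intro rel_ideal_mult_left[OF free_on_mult[OF B Y]]) simp
  ultimately have "(repr (amul (nilcox (Suc m)) b ?s) - repr b * repr ?s) * ?Y * repr c
      + repr b * (repr ?s - repr s) * ?Y * repr c + repr b * (repr s * ?Y - ?Y * repr s) * repr c
      + repr b * ?Y * (repr s - repr ?s) * repr c
      + repr b * ?Y * (repr ?s * repr c - repr (amul (nilcox (Suc m)) ?s c)) \<in> rel_ideal (Suc (Suc m))"
    by (intro rel_ideal_add)
  then show ?thesis by (simp add: glue_pair_def algebra_simps)
qed

lemma glue_pair_compatible: "tz_compatible (Xmod m) (nilcox m) (Dmod (Suc m)) (Suc (Suc m)) (glue_pair m)"
  unfolding tz_compatible_def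
proof (intro conjI ballI)
  fix b b' c assume "b \<in> mcarrier (Xmod m)" "b' \<in> mcarrier (Xmod m)" "c \<in> mcarrier (Dmod (Suc m))"
  then have "(repr (aadd (nilcox (Suc m)) b b') - (repr b + repr b')) * (mon [Suc m] * repr c)
      \<in> rel_ideal (Suc (Suc m))"
    using rel_ideal_mult_right[OF free_on_mult[OF mon_top_letter_free_below repr_free_below_Suc]
        rel_ideal_Suc[OF repr_aadd]] by simp
  then show "glue_pair m (madd (Xmod m) b b', c) - glue_pair m (b, c) - glue_pair m (b', c)
      \<in> rel_ideal (Suc (Suc m))"
    by (simp add: glue_pair_def algebra_simps)
next
  fix b c c' assume "b \<in> mcarrier (Xmod m)" "c \<in> mcarrier (Dmod (Suc m))" "c' \<in> mcarrier (Dmod (Suc m))"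
  then have "(repr b * mon [Suc m]) * (repr (aadd (nilcox (Suc m)) c c') - (repr c + repr c'))
      \<in> rel_ideal (Suc (Suc m))"
    using rel_ideal_mult_left[OF free_on_mult[OF repr_free_below_Suc mon_top_letter_free_below]
        rel_ideal_Suc[OF repr_aadd]] by simp
  then show "glue_pair m (b, madd (Dmod (Suc m)) c c') - glue_pair m (b, c) - glue_pair m (b, c')
      \<in> rel_ideal (Suc (Suc m))"
    by (simp add: glue_pair_def algebra_simps)
next
  fix b s c assume "b \<in> mcarrier (Xmod m)" "s \<in> acarrier (nilcox m)" "c \<in> mcarrier (Dmod (Suc m))"
  then show "glue_pair m (ract (Xmod m) b s, c) - glue_pair m (b, lact (Dmod (Suc m)) s c)
      \<in> rel_ideal (Suc (Suc m))"
    using glue_pair_balanced by simp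
qed

lemma lin_ext_glue_pair_free_below:
  assumes "x \<in> tz_free (Xmod m) (Dmod (Suc m))"
  shows "lin_ext (glue_pair m) x \<in> free_below (Suc (Suc m))"
proof (rule lin_ext_free_below)
  fix p assume "p \<in> zsupp x"
  then have "fst p \<in> Acar (Suc m)" "snd p \<in> Acar (Suc m)" using zsupp_tz_free[OF assms] by auto
  then show "glue_pair m p \<in> free_below (Suc (Suc m))"
    unfolding glue_pair_def by (intro free_on_mult repr_free_below_Suc mon_top_letter_free_below)
qed

lemma glue_map_cls:
  "x \<in> tz_free (Xmod m) (Dmod (Suc m))
   \<Longrightarrow> glue_map m (a, tz_cls (Xmod m) (nilcox m) (Dmod (Suc m)) x)
     = cls (Suc (Suc m)) (repr a + lin_ext (glue_pair m) x)"
  unfolding glue_map_def using lin_ext_rep_tz_cls[OF glue_pair_compatible] by (intro cls_eqI) simp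

lemma glue_map_free_below:
  assumes "a \<in> Acar (Suc m)" "X \<in> mcarrier (tensor (Xmod m) (nilcox m) (Dmod (Suc m)))"
  shows "repr a + lin_ext (glue_pair m) (rep X) \<in> free_below (Suc (Suc m))"
  using assms by (intro free_on_add repr_free_below_Suc lin_ext_glue_pair_free_below tensor_carrier_rep(1))

lemma glue_pair_desc_elem:
  assumes b: "b \<in> Acar (Suc m)" and j: "1 \<le> j" "j \<le> Suc m"
  shows "glue_pair m (b, desc_elem m j) - repr b * mon (desc_word j (Suc m)) \<in> rel_ideal (Suc (Suc m))"
proof -
  have "(repr b * mon [Suc m]) * (repr (desc_elem m j) - mon (desc_word j m)) \<in> rel_ideal (Suc (Suc m))"
    unfolding desc_elem_def
    by (rule rel_ideal_mult_left[OF free_on_mult[OF repr_free_below_Suc[OF b] mon_top_letter_free_below]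
          rel_ideal_Suc[OF repr_cls_diff[OF mon_desc_word_free_below[OF j(1)]]]])
  moreover have "mon (desc_word j (Suc m)) = mon [Suc m] * mon (desc_word j m)"
    using desc_word_Suc[OF j(2)] by (simp add: mon_append[symmetric])
  ultimately show ?thesis by (simp add: glue_pair_def algebra_simps)
qed

lemma glue_map_desc_sum:
  assumes a: "a \<in> Acar (Suc m)" and b: "\<forall>j\<in>{1..Suc m}. b j \<in> Acar (Suc m)"
  shows "glue_map m (a, tz_cls (Xmod m) (nilcox m) (Dmod (Suc m)) (\<lambda>q. \<Sum>j\<in>{1..Suc m}. tz_delta (b j, desc_elem m j) q))
    = cls (Suc (Suc m)) (\<Sum>j\<in>{1..Suc (Suc m)}. (if j = Suc (Suc m) then repr a else repr (b j)) * mon (desc_word j (Suc m)))"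
proof -
  have "(\<lambda>q. \<Sum>j\<in>{1..Suc m}. tz_delta (b j, desc_elem m j) q) \<in> tz_free (Xmod m) (Dmod (Suc m))"
    using b desc_elem_carrier by (intro tz_free_sum_delta) auto
  then have "glue_map m (a, tz_cls (Xmod m) (nilcox m) (Dmod (Suc m)) (\<lambda>q. \<Sum>j\<in>{1..Suc m}. tz_delta (b j, desc_elem m j) q))
      = cls (Suc (Suc m)) (repr a + (\<Sum>j\<in>{1..Suc m}. glue_pair m (b j, desc_elem m j)))"
    by (simp add: glue_map_cls lin_ext_sum_delta del: sum.cl_ivl_Suc)
  also have "\<dots> = cls (Suc (Suc m)) (repr a + (\<Sum>j\<in>{1..Suc m}. repr (b j) * mon (desc_word j (Suc m))))"
  proof (rule cls_eqI)
    have "(\<Sum>j\<in>{1..Suc m}. glue_pair m (b j, desc_elem m j) - repr (b j) * mon (desc_word j (Suc m)))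
        \<in> rel_ideal (Suc (Suc m))"
      using b glue_pair_desc_elem by (intro rel_ideal_sum) auto
    then show "repr a + (\<Sum>j\<in>{1..Suc m}. glue_pair m (b j, desc_elem m j))
        - (repr a + (\<Sum>j\<in>{1..Suc m}. repr (b j) * mon (desc_word j (Suc m)))) \<in> rel_ideal (Suc (Suc m))"
      by (simp add: sum_subtractf del: sum.cl_ivl_Suc)
  qed
  also have "repr a + (\<Sum>j\<in>{1..Suc m}. repr (b j) * mon (desc_word j (Suc m)))
      = (\<Sum>j\<in>{1..Suc (Suc m)}. (if j = Suc (Suc m) then repr a else repr (b j)) * mon (desc_word j (Suc m)))"
  proof -
    have "{1..Suc (Suc m)} = insert (Suc (Suc m)) {1..Suc m}" by auto
    moreover have "(\<Sum>j\<in>{1..Suc m}. (if j = Suc (Suc m) then repr a else repr (b j)) * mon (desc_word j (Suc m)))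
        = (\<Sum>j\<in>{1..Suc m}. repr (b j) * mon (desc_word j (Suc m)))"
      by (rule sum.cong) auto
    ultimately show ?thesis by (simp add: desc_word_empty mon_Nil add.commute del: sum.cl_ivl_Suc)
  qed
  finally show ?thesis .
qed

lemma tz_equiv_delta_cls_sum:
  assumes b: "b \<in> Acar (Suc m)" and "finite J" and "\<forall>j\<in>J. y j \<in> free_below (Suc m)"
  shows "tz_equiv (Xmod m) (nilcox m) (Dmod (Suc m)) (tz_delta (b, cls (Suc m) (\<Sum>j\<in>J. y j)))
    (\<lambda>q. \<Sum>j\<in>J. tz_delta (b, cls (Suc m) (y j)) q)"
  using assms(2,3)
proof (induction J rule: finite_induct)
  case empty
  show ?case
    using tz_equiv_delta_zero_right[of b "Xmod m" "cls (Suc m) 0" "Dmod (Suc m)" "nilcox m"] b cls_in_carrier[of 0 "Suc m"]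
    by (simp add: aadd_cls)
next
  case (insert i J)
  have y: "y i \<in> free_below (Suc m)" "(\<Sum>j\<in>J. y j) \<in> free_below (Suc m)" using insert by auto
  have "cls (Suc m) (\<Sum>j\<in>insert i J. y j) = aadd (nilcox (Suc m)) (cls (Suc m) (y i)) (cls (Suc m) (\<Sum>j\<in>J. y j))"
    using insert aadd_cls[OF y] by simp
  then have "tz_equiv (Xmod m) (nilcox m) (Dmod (Suc m)) (tz_delta (b, cls (Suc m) (\<Sum>j\<in>insert i J. y j)))
      (\<lambda>q. tz_delta (b, cls (Suc m) (y i)) q + tz_delta (b, cls (Suc m) (\<Sum>j\<in>J. y j)) q)"
    using tz_equiv_add_right[of b "Xmod m" "cls (Suc m) (y i)" "Dmod (Suc m)" "cls (Suc m) (\<Sum>j\<in>J. y j)"] b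
      cls_in_carrier[OF y(1)] cls_in_carrier[OF y(2)] by simp
  moreover have "tz_equiv (Xmod m) (nilcox m) (Dmod (Suc m))
      (\<lambda>q. tz_delta (b, cls (Suc m) (y i)) q + tz_delta (b, cls (Suc m) (\<Sum>j\<in>J. y j)) q)
      (\<lambda>q. tz_delta (b, cls (Suc m) (y i)) q + (\<Sum>j\<in>J. tz_delta (b, cls (Suc m) (y j)) q))"
    using insert by (intro tz_equiv_add tz_equiv_refl) auto
  ultimately show ?case using insert tz_equiv_trans by simp
qed

lemma tz_equiv_desc_elem_balanced:
  assumes b: "b \<in> Acar (Suc m)" and g: "g \<in> free_below m" and j: "1 \<le> j"
  shows "tz_equiv (Xmod m) (nilcox m) (Dmod (Suc m)) (tz_delta (b, cls (Suc m) (g * mon (desc_word j m))))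
    (tz_delta (amul (nilcox (Suc m)) b (nc_chi m (cls m g)), desc_elem m j))"
proof -
  have "lact (Dmod (Suc m)) (cls m g) (desc_elem m j) = cls (Suc m) (g * mon (desc_word j m))"
    using chi_cls[OF g] amul_cls[OF free_below_Suc[OF g] mon_desc_word_free_below[OF j]]
    by (simp add: desc_elem_def)
  moreover have "tz_equiv (Xmod m) (nilcox m) (Dmod (Suc m))
      (tz_delta (ract (Xmod m) b (cls m g), desc_elem m j))
      (tz_delta (b, lact (Dmod (Suc m)) (cls m g) (desc_elem m j)))"
    using b cls_in_carrier[OF g] desc_elem_carrier[OF j] by (intro tz_equiv_balanced) auto
  ultimately show ?thesis using tz_equiv_sym by fastforce
qed

text \<open>Write \<open>c = \<Sum>\<^sub>j g\<^sub>j Y\<^sub>m \<dots> Y\<^sub>j\<close> with \<open>g\<^sub>j \<in> A\<^sub>m\<close> and move the \<open>g\<^sub>j\<close> across the tensor sign.\<close>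

lemma tensor_desc_span_pure:
  assumes b: "b \<in> Acar (Suc m)" and c: "c \<in> Acar (Suc m)"
  shows "tz_span (Xmod m) (nilcox m) (Dmod (Suc m)) {1..Suc m} (desc_elem m) (tz_delta (b, c))"
proof -
  obtain g where g: "\<forall>j. g j \<in> free_below m"
    and c_eq: "repr c - (\<Sum>j\<in>{1..Suc m}. g j * mon (desc_word j m)) \<in> rel_ideal (Suc m)"
    using desc_spanned_free_below[OF repr_free_below[OF c]] unfolding desc_spanned_def by blast
  have gw: "\<forall>j\<in>{1..Suc m}. g j * mon (desc_word j m) \<in> free_below (Suc m)"
    using g free_below_Suc mon_desc_word_free_below by (auto intro!: free_on_mult)
  have "c = cls (Suc m) (\<Sum>j\<in>{1..Suc m}. g j * mon (desc_word j m))"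
    using cls_repr[OF c] cls_eqI[OF c_eq] by simp
  then have "tz_equiv (Xmod m) (nilcox m) (Dmod (Suc m)) (tz_delta (b, c))
      (\<lambda>q. \<Sum>j\<in>{1..Suc m}. tz_delta (b, cls (Suc m) (g j * mon (desc_word j m))) q)"
    using tz_equiv_delta_cls_sum[OF b _ gw] by simp
  also have "tz_equiv (Xmod m) (nilcox m) (Dmod (Suc m)) \<dots>
      (\<lambda>q. \<Sum>j\<in>{1..Suc m}. tz_delta (amul (nilcox (Suc m)) b (nc_chi m (cls m (g j))), desc_elem m j) q)"
    using b g by (intro tz_equiv_sum tz_equiv_desc_elem_balanced) auto
  finally show ?thesis
    unfolding tz_span_def using b g amul_closed chi_closed cls_in_carrier
    by (intro exI[of _ "\<lambda>j. amul (nilcox (Suc m)) b (nc_chi m (cls m (g j)))"]) auto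
qed

lemma tensor_desc_span:
  "x \<in> tz_free (Xmod m) (Dmod (Suc m)) \<Longrightarrow> tz_span (Xmod m) (nilcox m) (Dmod (Suc m)) {1..Suc m} (desc_elem m) x"
proof (rule tz_spanning_nilcox)
  fix b c assume "b \<in> mcarrier (Xmod m)" "c \<in> mcarrier (Dmod (Suc m))"
  then show "tz_span (Xmod m) (nilcox m) (Dmod (Suc m)) {1..Suc m} (desc_elem m) (tz_delta (b, c))"
    by (intro tensor_desc_span_pure) simp_all
qed (simp_all add: desc_elem_carrier)

lemma tensor_desc_form:
  assumes "X \<in> mcarrier (tensor (Xmod m) (nilcox m) (Dmod (Suc m)))"
  obtains b where "\<forall>j\<in>{1..Suc m}. b j \<in> Acar (Suc m)"
    "X = tz_cls (Xmod m) (nilcox m) (Dmod (Suc m)) (\<lambda>q. \<Sum>j\<in>{1..Suc m}. tz_delta (b j, desc_elem m j) q)"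
proof -
  obtain b where b: "\<forall>j\<in>{1..Suc m}. b j \<in> Acar (Suc m)"
    and equiv: "tz_equiv (Xmod m) (nilcox m) (Dmod (Suc m)) (rep X) (\<lambda>q. \<Sum>j\<in>{1..Suc m}. tz_delta (b j, desc_elem m j) q)"
    using tensor_desc_span[OF tensor_carrier_rep(1)[OF assms]] unfolding tz_span_def by auto
  show ?thesis using that[OF b] tz_cls_eqI[OF equiv] tensor_carrier_rep(2)[OF assms] by simp
qed

lemma desc_sum_free_below:
  "\<forall>j\<in>{1..Suc (Suc m)}. G j \<in> free_below (Suc m)
   \<Longrightarrow> (\<Sum>j\<in>{1..Suc (Suc m)}. G j * mon (desc_word j (Suc m))) \<in> free_below (Suc (Suc m))"
  using free_below_Suc mon_desc_word_free_below by (intro free_on_sum free_on_mult) auto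

lemma glue_map_inj:
  "inj_on (glue_map m) (Acar (Suc m) \<times> mcarrier (tensor (Xmod m) (nilcox m) (Dmod (Suc m))))"
proof (rule inj_onI, clarify)
  fix a X a' X'
  assume a: "a \<in> Acar (Suc m)" "X \<in> mcarrier (tensor (Xmod m) (nilcox m) (Dmod (Suc m)))"
    and a': "a' \<in> Acar (Suc m)" "X' \<in> mcarrier (tensor (Xmod m) (nilcox m) (Dmod (Suc m)))"
    and eq: "glue_map m (a, X) = glue_map m (a', X')"
  obtain b where b: "\<forall>j\<in>{1..Suc m}. b j \<in> Acar (Suc m)"
    and X: "X = tz_cls (Xmod m) (nilcox m) (Dmod (Suc m)) (\<lambda>q. \<Sum>j\<in>{1..Suc m}. tz_delta (b j, desc_elem m j) q)"
    using tensor_desc_form[OF a(2)] .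
  obtain b' where b': "\<forall>j\<in>{1..Suc m}. b' j \<in> Acar (Suc m)"
    and X': "X' = tz_cls (Xmod m) (nilcox m) (Dmod (Suc m)) (\<lambda>q. \<Sum>j\<in>{1..Suc m}. tz_delta (b' j, desc_elem m j) q)"
    using tensor_desc_form[OF a'(2)] .
  define G where "G j = (if j = Suc (Suc m) then repr a else repr (b j))" for j
  define G' where "G' j = (if j = Suc (Suc m) then repr a' else repr (b' j))" for j
  have G: "\<forall>j\<in>{1..Suc (Suc m)}. G j \<in> free_below (Suc m)" "\<forall>j\<in>{1..Suc (Suc m)}. G' j \<in> free_below (Suc m)"
    using a a' b b' repr_free_below unfolding G_def G'_def by auto
  have "cls (Suc (Suc m)) (\<Sum>j\<in>{1..Suc (Suc m)}. G j * mon (desc_word j (Suc m)))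
      = cls (Suc (Suc m)) (\<Sum>j\<in>{1..Suc (Suc m)}. G' j * mon (desc_word j (Suc m)))"
    using eq glue_map_desc_sum[OF a(1) b] glue_map_desc_sum[OF a'(1) b'] X X' unfolding G_def G'_def by simp
  then have "(\<Sum>j\<in>{1..Suc (Suc m)}. G j * mon (desc_word j (Suc m)))
      - (\<Sum>j\<in>{1..Suc (Suc m)}. G' j * mon (desc_word j (Suc m))) \<in> rel_ideal (Suc (Suc m))"
    using cls_eq_iff[OF desc_sum_free_below[OF G(2)]] by blast
  then have "(\<Sum>j\<in>{1..Suc (Suc m)}. (G j - G' j) * mon (desc_word j (Suc m))) \<in> rel_ideal (Suc (Suc m))"
    by (simp add: left_diff_distrib sum_subtractf del: sum.cl_ivl_Suc)
  then have coeff: "G j - G' j \<in> rel_ideal (Suc m)" if "j \<in> {1..Suc (Suc m)}" for j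
    using G by (intro desc_coeffs_in_ideal[OF _ _ that]) auto
  have "repr a - repr a' \<in> rel_ideal (Suc m)" using coeff[of "Suc (Suc m)"] unfolding G_def G'_def by simp
  then have "a = a'" using repr_inject a(1) a'(1) by blast
  moreover have "b j = b' j" if j: "j \<in> {1..Suc m}" for j
  proof -
    have "repr (b j) - repr (b' j) \<in> rel_ideal (Suc m)" using coeff[of j] j unfolding G_def G'_def by simp
    then show ?thesis using repr_inject b b' j by blast
  qed
  then have "(\<lambda>q. \<Sum>j\<in>{1..Suc m}. tz_delta (b j, desc_elem m j) q) = (\<lambda>q. \<Sum>j\<in>{1..Suc m}. tz_delta (b' j, desc_elem m j) q)"
    by (intro ext sum.cong) auto
  ultimately show "a = a' \<and> X = X'" using X X' by simp
qed

lemma glue_map_coeffs: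
  assumes g: "\<forall>j. g j \<in> free_below (Suc m)"
  shows "glue_map m (cls (Suc m) (g (Suc (Suc m))), tz_cls (Xmod m) (nilcox m) (Dmod (Suc m))
      (\<lambda>q. \<Sum>j\<in>{1..Suc m}. tz_delta (cls (Suc m) (g j), desc_elem m j) q))
    = cls (Suc (Suc m)) (\<Sum>j\<in>{1..Suc (Suc m)}. g j * mon (desc_word j (Suc m)))"
proof -
  let ?G = "\<lambda>j. if j = Suc (Suc m) then repr (cls (Suc m) (g (Suc (Suc m)))) else repr (cls (Suc m) (g j))"
  have "(\<Sum>j\<in>{1..Suc (Suc m)}. (?G j - g j) * mon (desc_word j (Suc m))) \<in> rel_ideal (Suc (Suc m))"
  proof (intro rel_ideal_sum rel_ideal_mult_right)
    fix j assume "j \<in> {1..Suc (Suc m)}"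
    then show "mon (desc_word j (Suc m)) \<in> free_below (Suc (Suc m))"
      using mon_desc_word_free_below by simp
    show "?G j - g j \<in> rel_ideal (Suc (Suc m))"
      using rel_ideal_Suc[OF repr_cls_diff] g by simp
  qed
  then have eq: "cls (Suc (Suc m)) (\<Sum>j\<in>{1..Suc (Suc m)}. ?G j * mon (desc_word j (Suc m)))
      = cls (Suc (Suc m)) (\<Sum>j\<in>{1..Suc (Suc m)}. g j * mon (desc_word j (Suc m)))"
    by (intro cls_eqI) (simp add: left_diff_distrib sum_subtractf del: sum.cl_ivl_Suc)
  have "cls (Suc m) (g (Suc (Suc m))) \<in> Acar (Suc m)" "\<forall>j\<in>{1..Suc m}. cls (Suc m) (g j) \<in> Acar (Suc m)"
    using g cls_in_carrier by blast+
  from glue_map_desc_sum[OF this] show ?thesis unfolding eq .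
qed

lemma glue_map_surj:
  "glue_map m ` (Acar (Suc m) \<times> mcarrier (tensor (Xmod m) (nilcox m) (Dmod (Suc m)))) = Acar (Suc (Suc m))"
proof
  show "glue_map m ` (Acar (Suc m) \<times> mcarrier (tensor (Xmod m) (nilcox m) (Dmod (Suc m)))) \<subseteq> Acar (Suc (Suc m))"
    unfolding glue_map_def using glue_map_free_below cls_in_carrier by auto
  show "Acar (Suc (Suc m)) \<subseteq> glue_map m ` (Acar (Suc m) \<times> mcarrier (tensor (Xmod m) (nilcox m) (Dmod (Suc m))))"
  proof
    fix y assume y: "y \<in> Acar (Suc (Suc m))"
    obtain g where g: "\<forall>j. g j \<in> free_below (Suc m)"
      and y_eq: "repr y - (\<Sum>j\<in>{1..Suc (Suc m)}. g j * mon (desc_word j (Suc m))) \<in> rel_ideal (Suc (Suc m))"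
      using desc_spanned_free_below[OF repr_free_below[OF y]] unfolding desc_spanned_def by blast
    let ?X = "tz_cls (Xmod m) (nilcox m) (Dmod (Suc m))
      (\<lambda>q. \<Sum>j\<in>{1..Suc m}. tz_delta (cls (Suc m) (g j), desc_elem m j) q)"
    have "(\<lambda>q. \<Sum>j\<in>{1..Suc m}. tz_delta (cls (Suc m) (g j), desc_elem m j) q) \<in> tz_free (Xmod m) (Dmod (Suc m))"
      using g cls_in_carrier desc_elem_carrier by (intro tz_free_sum_delta) auto
    then have "?X \<in> mcarrier (tensor (Xmod m) (nilcox m) (Dmod (Suc m)))" by simp
    moreover have "glue_map m (cls (Suc m) (g (Suc (Suc m))), ?X) = y"
      using glue_map_coeffs[OF g] cls_eqI[OF y_eq] cls_repr[OF y] by simp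
    ultimately show "y \<in> glue_map m ` (Acar (Suc m) \<times> mcarrier (tensor (Xmod m) (nilcox m) (Dmod (Suc m))))"
      using g cls_in_carrier by (intro image_eqI[of _ _ "(cls (Suc m) (g (Suc (Suc m))), ?X)"]) auto
  qed
qed

lemma glue_map_add:
  assumes "a \<in> Acar (Suc m)" "X \<in> mcarrier (tensor (Xmod m) (nilcox m) (Dmod (Suc m)))"
    and "a' \<in> Acar (Suc m)" "X' \<in> mcarrier (tensor (Xmod m) (nilcox m) (Dmod (Suc m)))"
  shows "glue_map m (aadd (nilcox (Suc m)) a a', madd (tensor (Xmod m) (nilcox m) (Dmod (Suc m))) X X')
    = aadd (nilcox (Suc (Suc m))) (glue_map m (a, X)) (glue_map m (a', X'))"
proof -
  have x: "rep X \<in> tz_free (Xmod m) (Dmod (Suc m))" "rep X' \<in> tz_free (Xmod m) (Dmod (Suc m))"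
    using tensor_carrier_rep(1) assms(2,4) by blast+
  have "glue_map m (aadd (nilcox (Suc m)) a a', madd (tensor (Xmod m) (nilcox m) (Dmod (Suc m))) X X')
      = cls (Suc (Suc m)) (repr (aadd (nilcox (Suc m)) a a') + lin_ext (glue_pair m) (\<lambda>q. rep X q + rep X' q))"
    using x by (simp add: glue_map_cls tz_free_add)
  also have "\<dots> = cls (Suc (Suc m)) ((repr a + lin_ext (glue_pair m) (rep X)) + (repr a' + lin_ext (glue_pair m) (rep X')))"
  proof (rule cls_eqI)
    have "repr (aadd (nilcox (Suc m)) a a') - (repr a + repr a') \<in> rel_ideal (Suc (Suc m))"
      using rel_ideal_Suc[OF repr_aadd[OF assms(1,3)]] .
    then show "repr (aadd (nilcox (Suc m)) a a') + lin_ext (glue_pair m) (\<lambda>q. rep X q + rep X' q)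
        - (repr a + lin_ext (glue_pair m) (rep X) + (repr a' + lin_ext (glue_pair m) (rep X')))
        \<in> rel_ideal (Suc (Suc m))"
      using x by (simp add: lin_ext_add finite_zsupp_free algebra_simps)
  qed
  also have "\<dots> = aadd (nilcox (Suc (Suc m))) (glue_map m (a, X)) (glue_map m (a', X'))"
    using aadd_cls[OF glue_map_free_below[OF assms(1,2)] glue_map_free_below[OF assms(3,4)]]
    by (simp add: glue_map_def)
  finally show ?thesis .
qed

lemma glue_pair_amul_left:
  assumes "r \<in> Acar (Suc m)" "b \<in> Acar (Suc m)" "c \<in> Acar (Suc m)"
  shows "glue_pair m (amul (nilcox (Suc m)) r b, c) - repr (nc_chi (Suc m) r) * glue_pair m (b, c)
    \<in> rel_ideal (Suc (Suc m))"
  using rel_ideal_mult_right[OF free_on_mult[OF mon_top_letter_free_below repr_free_below_Suc[OF assms(3)]]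
      repr_amul_chi_left[OF assms(1,2)]]
  by (simp add: glue_pair_def algebra_simps)

lemma glue_pair_amul_right:
  assumes "b \<in> Acar (Suc m)" "c \<in> Acar (Suc m)" "s \<in> Acar (Suc m)"
  shows "glue_pair m (b, amul (nilcox (Suc m)) c s) - glue_pair m (b, c) * repr (nc_chi (Suc m) s)
    \<in> rel_ideal (Suc (Suc m))"
  using rel_ideal_mult_left[OF free_on_mult[OF repr_free_below_Suc[OF assms(1)] mon_top_letter_free_below]
      repr_amul_chi_right[OF assms(2,3)]]
  by (simp add: glue_pair_def algebra_simps)

lemma glue_map_lact:
  assumes r: "r \<in> Acar (Suc m)"
    and a: "a \<in> Acar (Suc m)" and X: "X \<in> mcarrier (tensor (Xmod m) (nilcox m) (Dmod (Suc m)))"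
  shows "glue_map m (amul (nilcox (Suc m)) r a, lact (tensor (Xmod m) (nilcox m) (Dmod (Suc m))) r X)
    = amul (nilcox (Suc (Suc m))) (nc_chi (Suc m) r) (glue_map m (a, X))"
proof -
  let ?c = "nc_chi (Suc m) r"
  let ?f = "\<lambda>(b, c). (amul (nilcox (Suc m)) r b, c)"
  have x: "rep X \<in> tz_free (Xmod m) (Dmod (Suc m))" by (rule tensor_carrier_rep(1)[OF X])
  have c: "?c \<in> Acar (Suc (Suc m))" by (rule chi_closed[OF r])
  have "tz_map ?f (rep X) \<in> tz_free (Xmod m) (Dmod (Suc m))"
    using x r amul_closed by (intro tz_free_map) auto
  then have "glue_map m (amul (nilcox (Suc m)) r a, lact (tensor (Xmod m) (nilcox m) (Dmod (Suc m))) r X)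
      = cls (Suc (Suc m)) (repr (amul (nilcox (Suc m)) r a) + lin_ext (glue_pair m) (tz_map ?f (rep X)))"
    by (simp add: glue_map_cls)
  also have "\<dots> = cls (Suc (Suc m)) (repr ?c * repr a + lin_ext (\<lambda>p. repr ?c * glue_pair m p) (rep X))"
  proof (rule cls_eqI)
    have lin: "lin_ext (glue_pair m) (tz_map ?f (rep X)) - lin_ext (\<lambda>p. repr ?c * glue_pair m p) (rep X)
        \<in> rel_ideal (Suc (Suc m))"
      using zsupp_tz_free[OF x] glue_pair_amul_left[OF r]
      by (intro lin_ext_map_cong[OF finite_zsupp_free[OF x]]) auto
    show "repr (amul (nilcox (Suc m)) r a) + lin_ext (glue_pair m) (tz_map ?f (rep X))
        - (repr ?c * repr a + lin_ext (\<lambda>p. repr ?c * glue_pair m p) (rep X)) \<in> rel_ideal (Suc (Suc m))"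
      using rel_ideal_add[OF repr_amul_chi_left[OF r a] lin] by (simp add: algebra_simps)
  qed
  also have "\<dots> = amul (nilcox (Suc (Suc m))) ?c (glue_map m (a, X))"
    using amul_cls[OF repr_free_below[OF c] glue_map_free_below[OF a X]] cls_repr[OF c]
    by (simp add: glue_map_def lin_ext_mult_left distrib_left)
  finally show ?thesis .
qed

lemma glue_map_ract:
  assumes s: "s \<in> Acar (Suc m)"
    and a: "a \<in> Acar (Suc m)" and X: "X \<in> mcarrier (tensor (Xmod m) (nilcox m) (Dmod (Suc m)))"
  shows "glue_map m (amul (nilcox (Suc m)) a s, ract (tensor (Xmod m) (nilcox m) (Dmod (Suc m))) X s)
    = amul (nilcox (Suc (Suc m))) (glue_map m (a, X)) (nc_chi (Suc m) s)"
proof -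
  let ?c = "nc_chi (Suc m) s"
  let ?f = "\<lambda>(b, c). (b, amul (nilcox (Suc m)) c s)"
  have x: "rep X \<in> tz_free (Xmod m) (Dmod (Suc m))" by (rule tensor_carrier_rep(1)[OF X])
  have c: "?c \<in> Acar (Suc (Suc m))" by (rule chi_closed[OF s])
  have "tz_map ?f (rep X) \<in> tz_free (Xmod m) (Dmod (Suc m))"
    using x s amul_closed by (intro tz_free_map) auto
  then have "glue_map m (amul (nilcox (Suc m)) a s, ract (tensor (Xmod m) (nilcox m) (Dmod (Suc m))) X s)
      = cls (Suc (Suc m)) (repr (amul (nilcox (Suc m)) a s) + lin_ext (glue_pair m) (tz_map ?f (rep X)))"
    by (simp add: glue_map_cls)
  also have "\<dots> = cls (Suc (Suc m)) (repr a * repr ?c + lin_ext (\<lambda>p. glue_pair m p * repr ?c) (rep X))"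
  proof (rule cls_eqI)
    have lin: "lin_ext (glue_pair m) (tz_map ?f (rep X)) - lin_ext (\<lambda>p. glue_pair m p * repr ?c) (rep X)
        \<in> rel_ideal (Suc (Suc m))"
      using zsupp_tz_free[OF x] glue_pair_amul_right[OF _ _ s]
      by (intro lin_ext_map_cong[OF finite_zsupp_free[OF x]]) auto
    show "repr (amul (nilcox (Suc m)) a s) + lin_ext (glue_pair m) (tz_map ?f (rep X))
        - (repr a * repr ?c + lin_ext (\<lambda>p. glue_pair m p * repr ?c) (rep X)) \<in> rel_ideal (Suc (Suc m))"
      using rel_ideal_add[OF repr_amul_chi_right[OF a s] lin] by (simp add: algebra_simps)
  qed
  also have "\<dots> = amul (nilcox (Suc (Suc m))) (glue_map m (a, X)) ?c"
    using amul_cls[OF glue_map_free_below[OF a X] repr_free_below[OF c]] cls_repr[OF c]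
    by (simp add: glue_map_def lin_ext_mult_right distrib_right)
  finally show ?thesis .
qed

theorem glue_map_iso:
  "bimod_iso (nilcox (Suc m)) (nilcox (Suc m))
     (dsum (regbimod (nilcox (Suc m)) id id) (tensor (Xmod m) (nilcox m) (Dmod (Suc m))))
     (regbimod (nilcox (Suc (Suc m))) (nc_chi (Suc m)) (nc_chi (Suc m)))"
  unfolding bimod_iso_def
proof (intro exI[of _ "glue_map m"] conjI ballI)
  show "bij_betw (glue_map m) (mcarrier (dsum (regbimod (nilcox (Suc m)) id id) (tensor (Xmod m) (nilcox m) (Dmod (Suc m)))))
      (mcarrier (regbimod (nilcox (Suc (Suc m))) (nc_chi (Suc m)) (nc_chi (Suc m))))"
    using glue_map_inj glue_map_surj by (simp add: bij_betw_def del: tensor_simps(1))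
qed (auto simp del: tensor_simps simp: glue_map_add glue_map_lact glue_map_ract)

section \<open>The case \<open>n = 0\<close> and the main theorem\<close>

lemma chi_aadd:
  assumes "a \<in> Acar n" "b \<in> Acar n"
  shows "nc_chi n (aadd (nilcox n) a b) = aadd (nilcox (Suc n)) (nc_chi n a) (nc_chi n b)"
proof -
  have "nc_chi n (aadd (nilcox n) a b) = cls (Suc n) (repr a + repr b)"
    using chi_eq_cls_repr[OF aadd_closed[OF assms]] rel_ideal_Suc[OF repr_aadd[OF assms]] cls_eqI by metis
  then show ?thesis
    using aadd_cls[OF free_below_Suc[OF repr_free_below] free_below_Suc[OF repr_free_below]] assms
    by (simp add: chi_eq_cls_repr)
qed

lemma chi_amul:
  assumes "a \<in> Acar n" "b \<in> Acar n"
  shows "nc_chi n (amul (nilcox n) a b) = amul (nilcox (Suc n)) (nc_chi n a) (nc_chi n b)"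
proof -
  have "nc_chi n (amul (nilcox n) a b) = cls (Suc n) (repr a * repr b)"
    using chi_eq_cls_repr[OF amul_closed[OF assms]] rel_ideal_Suc[OF repr_amul[OF assms]] cls_eqI by metis
  then show ?thesis
    using amul_cls[OF free_below_Suc[OF repr_free_below] free_below_Suc[OF repr_free_below]] assms
    by (simp add: chi_eq_cls_repr)
qed

text \<open>\<open>A\<^sub>n\<close> is the summand of the empty descending word.\<close>

lemma chi_inj: "inj_on (nc_chi n) (Acar n)"
proof (rule inj_onI)
  fix a b assume a: "a \<in> Acar n" and b: "b \<in> Acar n" and eq: "nc_chi n a = nc_chi n b"
  let ?g = "\<lambda>j. if j = Suc n then repr a - repr b else 0"
  have "cls (Suc n) (repr a) = cls (Suc n) (repr b)" using eq by (simp add: chi_eq_cls_repr a b)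
  then have "repr a - repr b \<in> rel_ideal (Suc n)"
    using cls_eq_iff[OF free_below_Suc[OF repr_free_below[OF b]]] by blast
  moreover have "(\<Sum>j\<in>{1..Suc n}. ?g j * mon (desc_word j n))
      = (\<Sum>j\<in>{1..Suc n}. if j = Suc n then (repr a - repr b) * mon (desc_word j n) else 0)"
    by (rule sum.cong) auto
  moreover have "\<dots> = repr a - repr b"
    by (simp add: desc_word_empty mon_Nil del: sum.cl_ivl_Suc)
  ultimately have "(\<Sum>j\<in>{1..Suc n}. ?g j * mon (desc_word j n)) \<in> rel_ideal (Suc n)" by simp
  then have "?g (Suc n) \<in> rel_ideal n"
    using desc_coeffs_in_ideal[of n ?g "Suc n"] repr_free_below[OF a] repr_free_below[OF b]
    by (simp add: free_on_diff)
  then show "a = b" using repr_inject[OF a b] by simp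
qed

lemma chi_zero_bij: "bij_betw (nc_chi 0) (Acar 0) (Acar 1)"
proof (rule bij_betw_imageI[OF chi_inj])
  show "nc_chi 0 ` Acar 0 = Acar 1"
  proof
    show "nc_chi 0 ` Acar 0 \<subseteq> Acar 1" using chi_closed by auto
    show "Acar 1 \<subseteq> nc_chi 0 ` Acar 0"
    proof
      fix y assume y: "y \<in> Acar 1"
      obtain g where g: "\<forall>j. g j \<in> free_below 0"
        and y_eq: "repr y - (\<Sum>j\<in>{1..Suc 0}. g j * mon (desc_word j 0)) \<in> rel_ideal (Suc 0)"
        using desc_spanned_free_below[of "repr y" 0] repr_free_below[OF y] unfolding desc_spanned_def by auto
      have "nc_chi 0 (cls 0 (g 1)) = cls 1 (g 1)" using chi_cls g by simp
      also have "\<dots> = y"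
        using cls_eqI[OF y_eq] cls_repr[OF y] by (simp add: desc_word_def mon_Nil)
      finally show "y \<in> nc_chi 0 ` Acar 0" using cls_in_carrier g by (metis image_eqI)
    qed
  qed
qed

theorem chi_zero_iso:
  "bimod_iso (nilcox 0) (nilcox 0) (dsum (regbimod (nilcox 0) id id) zero_bimod)
     (regbimod (nilcox 1) (nc_chi 0) (nc_chi 0))"
  unfolding bimod_iso_def
proof (intro exI[of _ "\<lambda>p. nc_chi 0 (fst p)"] conjI ballI)
  have "bij_betw fst (Acar 0 \<times> {undefined}) (Acar 0)"
    by (auto simp: bij_betw_def inj_on_def)
  from bij_betw_trans[OF this chi_zero_bij]
  show "bij_betw (\<lambda>p. nc_chi 0 (fst p)) (mcarrier (dsum (regbimod (nilcox 0) id id) zero_bimod))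
      (mcarrier (regbimod (nilcox 1) (nc_chi 0) (nc_chi 0)))"
    by (simp add: comp_def)
qed (auto simp: chi_aadd chi_amul)

lemma bimod_closed_Xmod: "bimod_closed (nilcox (Suc n)) (nilcox n) (Xmod n)"
  unfolding Xmod_def by (intro bimod_closed_regbimod) (simp_all add: chi_closed)

lemma bimod_closed_Dmod: "bimod_closed (nilcox n) (nilcox (Suc n)) (Dmod (Suc n))"
  unfolding Dmod_def by (intro bimod_closed_regbimod) (simp_all add: chi_closed)

theorem mainTheorem6:
  fixes n :: nat
  shows "bimod_iso (nilcox n) (nilcox n)
           (tensor (Dmod (Suc n)) (nilcox (Suc n)) (Xmod n))
           (dsum (regbimod (nilcox n) id id)
              (if n = 0 then zero_bimod
               else tensor (Xmod (n - 1)) (nilcox (n - 1)) (Dmod n)))"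
proof (cases n)
  case 0
  have "bimod_iso (nilcox 0) (nilcox 0) (regbimod (nilcox 1) (nc_chi 0) (nc_chi 0))
      (dsum (regbimod (nilcox 0) id id) zero_bimod)"
    by (intro bimod_iso_sym[OF chi_zero_iso] bimod_closed_dsum bimod_closed_regbimod bimod_closed_zero) simp_all
  then show ?thesis using bimod_iso_trans[OF mult_map_iso] 0 by simp
next
  case (Suc m)
  have "bimod_iso (nilcox (Suc m)) (nilcox (Suc m)) (regbimod (nilcox (Suc (Suc m))) (nc_chi (Suc m)) (nc_chi (Suc m)))
      (dsum (regbimod (nilcox (Suc m)) id id) (tensor (Xmod m) (nilcox m) (Dmod (Suc m))))"
    by (intro bimod_iso_sym[OF glue_map_iso] bimod_closed_dsum bimod_closed_regbimod bimod_closed_tensor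
        bimod_closed_Xmod bimod_closed_Dmod) simp_all
  then show ?thesis using bimod_iso_trans[OF mult_map_iso] Suc by simp
qed
end
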